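(* Let $\Omega\subset\mathbb R^d$ be open, bounded, and uniformly locally quasiconvex. Then there exists a bounded linear operator $E: C^1(\bar\Omega)\to C^1_b(\mathbb R^d)$ such that $(Ef)|_{\bar\Omega}=f$ for all $f\in C^1(\bar\Omega)$ (in particular, $\nabla(Ef)=\nabla f$ on $\bar\Omega$).
   Context: $C^1_b(\mathbb R^d)$ is the space of $f\in C^1(\mathbb R^d)$ with $f$ and $\nabla f$ bounded, normed by $\sup\{|\partial^\alpha f(x)|: |\alpha|\le 1, x\in\mathbb R^d\}$. For bounded open $\Omega$, $C^1(\bar\Omega)$ is the space of $f\in C^1(\Omega)$ such that $f$ and all first partial derivatives are uniformly continuous on $\Omega$, normed by $\sup\{|\partial^\alpha f(x)|:|\alpha|\le1,x\in\Omega\}$; $f$ and $\nabla f$ are identified with their continuous extensions to $\bar\Omega$. A set $\Omega\subset\mathbb R^d$ is uniformly locally quasiconvex if there are constants $r>0$, $L\ge1$ such that for all $x,y\in\Omega$ with $|x-y|\le r$ there is a Lipschitz curve $\gamma:[0,1]\to\Omega$ with $\gamma(0)=x$, $\gamma(1)=y$ and Lipschitz constant at most $L|y-x|$. *)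

theory Defs
  imports "HOL-Analysis.Analysis"
begin

text \<open>Points of R^d are elements of a euclidean_space 'a (d = DIM('a)).
  The i-th first partial derivative of f at x is the Frechet derivative of f at x
  applied to the basis vector i.\<close>

definition partial_deriv :: "('a::euclidean_space \<Rightarrow> real) \<Rightarrow> 'a \<Rightarrow> 'a \<Rightarrow> real" where
  "partial_deriv f i x = frechet_derivative f (at x) i"

definition unif_loc_quasiconvex :: "'a::euclidean_space set \<Rightarrow> bool" where
  "unif_loc_quasiconvex \<Omega> \<longleftrightarrow>
     (\<exists>r>0. \<exists>L\<ge>1. \<forall>x\<in>\<Omega>. \<forall>y\<in>\<Omega>. dist x y \<le> r \<longrightarrow>
        (\<exists>\<gamma>::real \<Rightarrow> 'a. \<gamma> 0 = x \<and> \<gamma> 1 = y \<and> \<gamma> ` {0..1} \<subseteq> \<Omega> \<and>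
              (L * dist x y)-lipschitz_on {0..1} \<gamma>))"

text \<open>C^1(closure Omega): f is C^1 on Omega, f and all first partials uniformly continuous
  on Omega. (Values of f outside Omega are irrelevant.)\<close>
definition C1_closure :: "'a::euclidean_space set \<Rightarrow> ('a \<Rightarrow> real) \<Rightarrow> bool" where
  "C1_closure \<Omega> f \<longleftrightarrow>
     (\<forall>x\<in>\<Omega>. f differentiable (at x)) \<and>
     uniformly_continuous_on \<Omega> f \<and>
     (\<forall>i\<in>Basis. uniformly_continuous_on \<Omega> (partial_deriv f i))"

text \<open>sup { |d^alpha f(x)| : |alpha| \<le> 1, x \<in> S } (with 0 added so that the
  empty case gives 0; all members are nonnegative anyway).\<close>
definition C1_norm :: "'a::euclidean_space set \<Rightarrow> ('a \<Rightarrow> real) \<Rightarrow> real" where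
  "C1_norm S f = Sup ({0} \<union> {\<bar>f x\<bar> | x. x \<in> S} \<union>
                      {\<bar>partial_deriv f i x\<bar> | x i. x \<in> S \<and> i \<in> Basis})"

definition C1_bounded :: "('a::euclidean_space \<Rightarrow> real) \<Rightarrow> bool" where
  "C1_bounded f \<longleftrightarrow>
     (\<forall>x. f differentiable (at x)) \<and>
     (\<forall>i\<in>Basis. continuous_on UNIV (partial_deriv f i)) \<and>
     bounded (range f) \<and>
     (\<forall>i\<in>Basis. bounded (range (partial_deriv f i)))"

end

theory Submission
  imports Defs
begin

text \<open>Whitney's construction. The complement of \<open>K = closure \<Omega>\<close> is covered by bumps centred at
  grid points, with radius comparable to the distance from \<open>K\<close>, and only boundedly many of them
  overlap at any point. Off \<open>K\<close> the extension is the bump-weighted average of first-order Taylor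
  polynomials of \<open>f\<close> taken at points of \<open>\<Omega>\<close> close to the bumps; on \<open>K\<close> it is the continuous
  extension of \<open>f\<close>. Uniform local quasiconvexity turns the uniform continuity of \<open>grad f\<close> into
  the Taylor estimate \<open>f y - f x - grad f x \<bullet> (y - x) = o(dist x y)\<close>, uniformly on \<open>\<Omega>\<close> and hence
  on \<open>K\<close>. So the polynomials averaged at a point at distance \<open>\<delta>\<close> from \<open>K\<close> differ by \<open>O(\<delta>)\<close>,
  which compensates the \<open>O(1/\<delta>)\<close> gradients of the bumps: the average has bounded gradient, and
  near \<open>K\<close> its value and gradient approach those of \<open>f\<close>.\<close>

section \<open>Gradients and the \<open>C\<^sup>1\<close> norm\<close>

definition grad :: "('a::euclidean_space \<Rightarrow> real) \<Rightarrow> 'a \<Rightarrow> 'a" where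
  "grad f x = (\<Sum>i\<in>Basis. partial_deriv f i x *\<^sub>R i)"

lemma has_derivative_grad:
  assumes "f differentiable (at x)"
  shows "(f has_derivative (\<lambda>w. grad f x \<bullet> w)) (at x)"
proof -
  let ?D = "frechet_derivative f (at x)"
  have D: "(f has_derivative ?D) (at x)" using assms frechet_derivative_works by blast
  then have lin: "linear ?D" using has_derivative_linear by blast
  have "?D w = grad f x \<bullet> w" for w
  proof -
    have "?D w = ?D (\<Sum>i\<in>Basis. (w \<bullet> i) *\<^sub>R i)" by (simp add: euclidean_representation)
    also have "\<dots> = (\<Sum>i\<in>Basis. (w \<bullet> i) * ?D i)"
      using lin by (simp add: linear_sum linear_cmul)
    also have "\<dots> = grad f x \<bullet> w"
      by (simp add: grad_def partial_deriv_def inner_sum_right inner_commute mult.commute)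
    finally show ?thesis .
  qed
  then have "?D = (\<lambda>w. grad f x \<bullet> w)" by (rule ext)
  then show ?thesis using D by simp
qed

lemma partial_deriv_eq_inner:
  assumes "(f has_derivative (\<lambda>w. g \<bullet> w)) (at x)"
  shows "partial_deriv f i x = g \<bullet> i"
  using frechet_derivative_at[OF assms] by (simp add: partial_deriv_def)

lemma grad_eqI:
  assumes "(f has_derivative (\<lambda>w. g \<bullet> w)) (at x)"
  shows "grad f x = g"
  by (simp add: grad_def partial_deriv_eq_inner[OF assms] euclidean_representation)

lemma grad_cong_open:
  assumes "f differentiable (at x)" "open S" "x \<in> S" "\<And>y. y \<in> S \<Longrightarrow> f y = g y"
  shows "grad g x = grad f x"
  by (rule grad_eqI, rule has_derivative_transform_within_open[OF has_derivative_grad[OF assms(1)] assms(2-4)])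

lemma grad_add:
  assumes "f differentiable (at x)" "g differentiable (at x)"
  shows "grad (\<lambda>y. f y + g y) x = grad f x + grad g x"
  using has_derivative_add[OF has_derivative_grad[OF assms(1)] has_derivative_grad[OF assms(2)]]
  by (intro grad_eqI) (simp add: inner_add_left)

lemma grad_cmult:
  assumes "f differentiable (at x)"
  shows "grad (\<lambda>y. c * f y) x = c *\<^sub>R grad f x"
  using has_derivative_mult_right[OF has_derivative_grad[OF assms], of c]
  by (intro grad_eqI) simp

lemma norm_grad_le:
  fixes f :: "'a::euclidean_space \<Rightarrow> real"
  assumes "\<And>i. i \<in> Basis \<Longrightarrow> \<bar>partial_deriv f i x\<bar> \<le> B"
  shows "norm (grad f x) \<le> real DIM('a) * B"
proof -
  have "norm (grad f x) \<le> (\<Sum>i\<in>Basis. norm (partial_deriv f i x *\<^sub>R i))"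
    unfolding grad_def by (rule norm_sum)
  also have "\<dots> \<le> (\<Sum>i\<in>(Basis::'a set). B)"
    by (rule sum_mono) (simp add: assms)
  finally show ?thesis by simp
qed

lemma uniformly_continuous_on_grad:
  assumes "\<And>i. i \<in> Basis \<Longrightarrow> uniformly_continuous_on S (partial_deriv f i)"
  shows "uniformly_continuous_on S (grad f)"
  unfolding grad_def
  by (intro uniformly_continuous_on_sum
      bounded_linear.uniformly_continuous_on[OF bounded_linear_scaleR_left] assms)

lemma bdd_above_C1_norm_set:
  assumes "bounded (f ` S)" "\<And>i. i \<in> Basis \<Longrightarrow> bounded (partial_deriv f i ` S)"
  shows "bdd_above ({0} \<union> {\<bar>f x\<bar> | x. x \<in> S} \<union> {\<bar>partial_deriv f i x\<bar> | x i. x \<in> S \<and> i \<in> Basis})"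
proof -
  obtain M1 where M1: "\<And>x. x \<in> S \<Longrightarrow> \<bar>f x\<bar> \<le> M1" using assms(1) unfolding bounded_iff by force
  have "bounded (\<Union>i\<in>Basis. partial_deriv f i ` S)" by (rule bounded_UN) (auto intro: assms(2))
  then obtain M2 where M2: "\<And>x i. x \<in> S \<Longrightarrow> i \<in> Basis \<Longrightarrow> \<bar>partial_deriv f i x\<bar> \<le> M2"
    unfolding bounded_iff by force
  show ?thesis
    by (rule bdd_aboveI[where M="\<bar>M1\<bar> + \<bar>M2\<bar>"]) (force dest: M1 M2)
qed

lemma C1_norm_ge:
  assumes "bounded (f ` S)" "\<And>i. i \<in> Basis \<Longrightarrow> bounded (partial_deriv f i ` S)"
  shows "0 \<le> C1_norm S f"
    and "x \<in> S \<Longrightarrow> \<bar>f x\<bar> \<le> C1_norm S f"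
    and "x \<in> S \<Longrightarrow> i \<in> Basis \<Longrightarrow> \<bar>partial_deriv f i x\<bar> \<le> C1_norm S f"
  unfolding C1_norm_def by (rule cSup_upper[OF _ bdd_above_C1_norm_set[OF assms]]; blast)+

lemma C1_norm_le:
  assumes "0 \<le> B" "\<And>x. x \<in> S \<Longrightarrow> \<bar>f x\<bar> \<le> B"
    "\<And>x i. x \<in> S \<Longrightarrow> i \<in> Basis \<Longrightarrow> \<bar>partial_deriv f i x\<bar> \<le> B"
  shows "C1_norm S f \<le> B"
  unfolding C1_norm_def by (rule cSup_least) (use assms in auto)

lemma partial_deriv_const: "partial_deriv (\<lambda>x::'a::euclidean_space. c) i x = 0"
  using partial_deriv_eq_inner[of "\<lambda>x. c" 0 x i] by (simp add: has_derivative_const)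

lemma C1_bounded_const: "C1_bounded (\<lambda>x::'a::euclidean_space. c)"
  by (simp add: C1_bounded_def partial_deriv_const)

lemma C1_norm_const_le: "C1_norm S (\<lambda>x::'a::euclidean_space. c) \<le> \<bar>c\<bar>"
  by (rule C1_norm_le) (simp_all add: partial_deriv_const)

section \<open>A \<open>C\<^sup>1\<close> bump function\<close>

lemma has_real_derivative_max0_power2:
  "((\<lambda>t::real. (max 0 t)\<^sup>2) has_real_derivative 2 * max 0 t) (at t)"
proof (cases t "0::real" rule: linorder_cases)
  case less
  have "((\<lambda>t::real. 0) has_real_derivative 2 * max 0 t) (at t)"
    using less by (auto intro!: derivative_eq_intros)
  then show ?thesis
    by (rule has_field_derivative_transform_within_open[where S="{..<0}"]) (use less in auto)
next
  case equal
  have "\<forall>\<^sub>F y in at 0. \<bar>(max 0 y)\<^sup>2 / y\<bar> \<le> \<bar>y::real\<bar>"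
    by (rule always_eventually) (auto simp: power2_eq_square abs_mult max_def divide_simps)
  then have "((\<lambda>y::real. (max 0 y)\<^sup>2 / y) \<longlongrightarrow> 0) (at 0)"
    by (intro Lim_null_comparison[OF _ tendsto_norm_zero[OF tendsto_ident_at]]) simp
  then show ?thesis using equal by (simp add: has_field_derivative_iff)
next
  case greater
  have "((\<lambda>t::real. t\<^sup>2) has_real_derivative 2 * max 0 t) (at t)"
    using greater by (auto intro!: derivative_eq_intros)
  then show ?thesis
    by (rule has_field_derivative_transform_within_open[where S="{0<..}"]) (use greater in auto)
qed

definition bump :: "real \<Rightarrow> 'a::euclidean_space \<Rightarrow> 'a \<Rightarrow> real" where
  "bump r v x = (max 0 (1 - (norm (x - v))\<^sup>2 / r\<^sup>2))\<^sup>2"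

definition bump_grad :: "real \<Rightarrow> 'a::euclidean_space \<Rightarrow> 'a \<Rightarrow> 'a" where
  "bump_grad r v x = (- 4 * max 0 (1 - (norm (x - v))\<^sup>2 / r\<^sup>2) / r\<^sup>2) *\<^sub>R (x - v)"

lemma bump_has_derivative:
  assumes r: "r > 0"
  shows "(bump r v has_derivative (\<lambda>w. bump_grad r v x \<bullet> w)) (at x)"
proof -
  have "((\<lambda>x. 1 - ((x - v) \<bullet> (x - v)) / r\<^sup>2) has_derivative
          (\<lambda>w. 0 - ((w \<bullet> (x - v) + (x - v) \<bullet> w) * r\<^sup>2 - ((x - v) \<bullet> (x - v)) * 0) / (r\<^sup>2 * r\<^sup>2))) (at x)"
    using r by (intro derivative_eq_intros) auto
  also have "(\<lambda>w. 0 - ((w \<bullet> (x - v) + (x - v) \<bullet> w) * r\<^sup>2 - ((x - v) \<bullet> (x - v)) * 0) / (r\<^sup>2 * r\<^sup>2))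
     = (\<lambda>w. - (2 * ((x - v) \<bullet> w)) / r\<^sup>2)"
    using r by (auto simp: inner_commute field_simps power2_eq_square)
  finally have "((\<lambda>x. (max 0 (1 - ((x - v) \<bullet> (x - v)) / r\<^sup>2))\<^sup>2) has_derivative
      (\<lambda>w. - (2 * ((x - v) \<bullet> w)) / r\<^sup>2 * (2 * max 0 (1 - ((x - v) \<bullet> (x - v)) / r\<^sup>2)))) (at x)"
    by (rule DERIV_compose_FDERIV[OF has_real_derivative_max0_power2])
  moreover have "(\<lambda>w. - (2 * ((x - v) \<bullet> w)) / r\<^sup>2 * (2 * max 0 (1 - ((x - v) \<bullet> (x - v)) / r\<^sup>2)))
      = (\<lambda>w. bump_grad r v x \<bullet> w)"
    unfolding bump_grad_def power2_norm_eq_inner inner_scaleR_left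
    by (rule ext) (simp add: divide_simps mult_ac)
  ultimately show ?thesis by (simp add: bump_def[abs_def] power2_norm_eq_inner)
qed

lemma bump_nonneg: "0 \<le> bump r v x"
  by (simp add: bump_def)

lemma dist_less_if_bump_nonzero:
  assumes "r > 0" "bump r v x \<noteq> 0"
  shows "dist x v < r"
proof (rule ccontr)
  assume "\<not> dist x v < r"
  then have "r\<^sup>2 \<le> (norm (x - v))\<^sup>2" using assms(1) by (simp add: dist_norm power_mono)
  then have "1 - (norm (x - v))\<^sup>2 / r\<^sup>2 \<le> 0" using assms(1) by (simp add: field_simps)
  then have "max 0 (1 - (norm (x - v))\<^sup>2 / r\<^sup>2) = 0" by linarith
  then show False using assms(2) by (simp add: bump_def)
qed

lemma bump_ge_9_16:
  assumes "r > 0" "dist x v \<le> r / 2"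
  shows "9/16 \<le> bump r v x"
proof -
  have "(norm (x - v))\<^sup>2 \<le> (r/2)\<^sup>2" using assms by (simp add: dist_norm power_mono)
  then have "(norm (x - v))\<^sup>2 / r\<^sup>2 \<le> 1/4"
    using assms(1) by (simp add: field_simps power2_eq_square)
  then have "3/4 \<le> max 0 (1 - (norm (x - v))\<^sup>2 / r\<^sup>2)" by linarith
  then have "(3/4::real)\<^sup>2 \<le> (max 0 (1 - (norm (x - v))\<^sup>2 / r\<^sup>2))\<^sup>2"
    by (rule power_mono) simp
  then show ?thesis by (simp add: bump_def power2_eq_square)
qed

lemma bump_grad_eq_0: "bump r v x = 0 \<Longrightarrow> bump_grad r v x = 0"
  by (simp add: bump_def bump_grad_def)

lemma norm_bump_grad_le:
  assumes r: "r > 0"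
  shows "norm (bump_grad r v x) \<le> 4 / r"
proof (cases "dist x v < r")
  case True
  let ?m = "max 0 (1 - (norm (x - v))\<^sup>2 / r\<^sup>2)"
  have m: "0 \<le> ?m" "?m \<le> 1" using r by auto
  have "norm (bump_grad r v x) = 4 * ?m / r\<^sup>2 * norm (x - v)"
    using m r by (simp add: bump_grad_def abs_mult)
  also have "\<dots> \<le> 4 * 1 / r\<^sup>2 * r"
    using m r True by (intro mult_mono divide_right_mono) (auto simp: dist_norm)
  also have "\<dots> = 4 / r" using r by (simp add: power2_eq_square)
  finally show ?thesis .
next
  case False
  then show ?thesis
    using dist_less_if_bump_nonzero[OF r] bump_grad_eq_0 r by fastforce
qed

lemma continuous_on_bump: "r > 0 \<Longrightarrow> continuous_on S (bump r v)"
  unfolding bump_def by (intro continuous_intros) auto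

lemma continuous_on_bump_grad: "r > 0 \<Longrightarrow> continuous_on S (bump_grad r v)"
  unfolding bump_grad_def by (intro continuous_intros) auto

section \<open>Dyadic scales and grids\<close>

definition dyadic :: "int \<Rightarrow> real" where
  "dyadic j = 2 powr of_int j"

lemma dyadic_pos [simp]: "0 < dyadic j"
  by (simp add: dyadic_def)

lemma dyadic_le_iff [simp]: "dyadic j \<le> dyadic k \<longleftrightarrow> j \<le> k"
  by (simp add: dyadic_def)

lemma dyadic_less_iff [simp]: "dyadic j < dyadic k \<longleftrightarrow> j < k"
  by (simp add: dyadic_def)

lemma dyadic_le_one_iff: "dyadic j \<le> 1 \<longleftrightarrow> j \<le> 0"
  using dyadic_le_iff[of j 0] by (simp add: dyadic_def)

lemma le_dyadic_iff: "a > 0 \<Longrightarrow> a \<le> dyadic j \<longleftrightarrow> \<lceil>log 2 a\<rceil> \<le> j"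
  by (simp add: dyadic_def ceiling_le_iff le_powr_iff)

lemma dyadic_le_iff_floor: "b > 0 \<Longrightarrow> dyadic j \<le> b \<longleftrightarrow> j \<le> \<lfloor>log 2 b\<rfloor>"
  by (simp add: dyadic_def le_floor_iff powr_le_iff)

lemma finite_dyadic_between:
  assumes "a > 0"
  shows "finite {j. a \<le> dyadic j \<and> dyadic j \<le> b}"
proof (cases "b > 0")
  case True
  then have "{j. a \<le> dyadic j \<and> dyadic j \<le> b} \<subseteq> {\<lceil>log 2 a\<rceil> .. \<lfloor>log 2 b\<rfloor>}"
    using assms by (auto simp: le_dyadic_iff dyadic_le_iff_floor)
  then show ?thesis by (rule finite_subset) simp
next
  case False
  then have "{j. a \<le> dyadic j \<and> dyadic j \<le> b} = {}" using assms by auto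
  then show ?thesis by (metis finite.emptyI)
qed

lemma card_dyadic_between_le_3:
  assumes "a > 0"
  shows "card {j. a \<le> dyadic j \<and> dyadic j < 8 * a} \<le> 3"
proof -
  let ?j = "\<lceil>log 2 a\<rceil>"
  have "8 * a \<le> dyadic (?j + 3)"
    using le_dyadic_iff[OF assms, of ?j] by (simp add: dyadic_def powr_add powr_numeral)
  then have "{j. a \<le> dyadic j \<and> dyadic j < 8 * a} \<subseteq> {?j .. ?j + 2}"
  proof (intro subsetI)
    fix j assume j: "j \<in> {j. a \<le> dyadic j \<and> dyadic j < 8 * a}"
    with \<open>8 * a \<le> dyadic (?j + 3)\<close> have "dyadic j < dyadic (?j + 3)" by (auto simp del: dyadic_less_iff)
    with j assms show "j \<in> {?j .. ?j + 2}" by (simp add: le_dyadic_iff)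
  qed
  then have "card {j. a \<le> dyadic j \<and> dyadic j < 8 * a} \<le> card {?j .. ?j + 2}"
    by (intro card_mono) auto
  then show ?thesis by simp
qed

lemma obtain_dyadic_between:
  assumes "t > 0"
  obtains j where "dyadic j \<le> t" "t < 2 * dyadic j"
proof
  let ?j = "\<lfloor>log 2 t\<rfloor>"
  show "dyadic ?j \<le> t" using dyadic_le_iff_floor[OF assms] by simp
  have "\<not> dyadic (?j + 1) \<le> t" using dyadic_le_iff_floor[OF assms] by simp
  then show "t < 2 * dyadic ?j" by (simp add: dyadic_def powr_add mult.commute)
qed

definition grid :: "real \<Rightarrow> 'a::euclidean_space set" where
  "grid h = {v. \<forall>i\<in>Basis. v \<bullet> i / h \<in> \<int>}"

lemma real_DIM_ge_1: "real DIM('a::euclidean_space) \<ge> 1"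
  by (simp add: DIM_positive Suc_leI)

lemma obtain_grid_point_near:
  fixes x :: "'a::euclidean_space"
  assumes h: "h > 0"
  obtains v where "v \<in> grid h" "dist x v \<le> real DIM('a) * h"
proof
  define v :: 'a where "v = (\<Sum>i\<in>Basis. (h * \<lfloor>x \<bullet> i / h\<rfloor>) *\<^sub>R i)"
  have v: "v \<bullet> i = h * \<lfloor>x \<bullet> i / h\<rfloor>" if "i \<in> Basis" for i
    using that by (simp add: v_def inner_sum_left inner_Basis if_distrib cong: if_cong)
  show "v \<in> grid h" using h by (simp add: grid_def v)
  have "\<bar>(x - v) \<bullet> i\<bar> \<le> h" if "i \<in> Basis" for i
  proof -
    have "h * \<lfloor>x \<bullet> i / h\<rfloor> \<le> h * (x \<bullet> i / h)" "h * (x \<bullet> i / h) < h * (\<lfloor>x \<bullet> i / h\<rfloor> + 1)"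
      using h by (simp_all del: times_divide_eq_right)
    then show ?thesis using that h by (simp add: inner_diff_left v algebra_simps)
  qed
  then have "norm (x - v) \<le> (\<Sum>i\<in>(Basis::'a set). h)"
    by (intro order_trans[OF norm_le_l1 sum_mono])
  then show "dist x v \<le> real DIM('a) * h" by (simp add: dist_norm)
qed

lemma inj_on_grid_coordinates:
  assumes "h > 0"
  shows "inj_on (\<lambda>v::'a::euclidean_space. \<lambda>i\<in>Basis. \<lfloor>v \<bullet> i / h\<rfloor>) (grid h)"
proof (rule inj_onI, rule euclidean_eqI)
  fix u v i :: 'a
  assume "u \<in> grid h" "v \<in> grid h" "(\<lambda>i\<in>Basis. \<lfloor>u \<bullet> i / h\<rfloor>) = (\<lambda>i\<in>Basis. \<lfloor>v \<bullet> i / h\<rfloor>)"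
    and i: "i \<in> Basis"
  then have "\<lfloor>u \<bullet> i / h\<rfloor> = \<lfloor>v \<bullet> i / h\<rfloor>" "u \<bullet> i / h \<in> \<int>" "v \<bullet> i / h \<in> \<int>"
    by (auto simp: grid_def dest: fun_cong[of _ _ i])
  then have "u \<bullet> i / h = v \<bullet> i / h" by (metis floor_of_int Ints_cases)
  then show "u \<bullet> i = v \<bullet> i" using assms by simp
qed

lemma grid_coordinate_near:
  assumes h: "h > 0" and v: "v \<in> grid h" "dist v y < real n * h" and i: "i \<in> Basis"
  shows "\<lfloor>v \<bullet> i / h\<rfloor> \<in> {\<lfloor>y \<bullet> i / h\<rfloor> - int n .. \<lfloor>y \<bullet> i / h\<rfloor> + int n}"
proof -
  obtain m where m: "v \<bullet> i / h = of_int m" using v i by (auto simp: grid_def elim!: Ints_cases)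
  have "\<bar>v \<bullet> i - y \<bullet> i\<bar> < real n * h"
    using Basis_le_norm[OF i, of "v - y"] v by (simp add: inner_diff_left dist_norm)
  then have "\<bar>v \<bullet> i / h - y \<bullet> i / h\<bar> < real n"
    using h by (simp add: field_simps abs_divide diff_divide_distrib[symmetric])
  then have "m - int n \<le> \<lfloor>y \<bullet> i / h\<rfloor>" "\<lfloor>y \<bullet> i / h\<rfloor> < m + int n"
    unfolding m by (simp_all add: le_floor_iff floor_less_iff)
  then show ?thesis using m by simp
qed

lemma finite_card_grid_ball:
  fixes y :: "'a::euclidean_space"
  assumes h: "h > 0"
  shows "finite (grid h \<inter> ball y (real n * h))"
    and "card (grid h \<inter> ball y (real n * h)) \<le> (2 * n + 1) ^ DIM('a)"
proof -
  let ?G = "grid h \<inter> ball y (real n * h)"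
  let ?c = "\<lambda>v. \<lambda>i\<in>Basis. \<lfloor>v \<bullet> i / h\<rfloor>"
  let ?P = "PiE Basis (\<lambda>i. {\<lfloor>y \<bullet> i / h\<rfloor> - int n .. \<lfloor>y \<bullet> i / h\<rfloor> + int n})"
  have inj: "inj_on ?c ?G" by (rule inj_on_subset[OF inj_on_grid_coordinates[OF h]]) simp
  have sub: "?c ` ?G \<subseteq> ?P"
    using grid_coordinate_near[OF h, of _ y n] by (force simp: dist_commute)
  have fin: "finite ?P" by (intro finite_PiE) auto
  show "finite ?G" using finite_imageD[OF finite_subset[OF sub fin] inj] .
  have "card ?G \<le> card ?P" using card_mono[OF fin sub] card_image[OF inj] by simp
  also have "card ?P = (2 * n + 1) ^ DIM('a)"
    by (simp add: card_PiE nat_add_distrib nat_mult_distrib)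
  finally show "card ?G \<le> (2 * n + 1) ^ DIM('a)" .
qed

section \<open>Taylor estimates on uniformly locally quasiconvex domains\<close>

lemma lipschitz_curve_increment_le:
  fixes \<phi> :: "'a::metric_space \<Rightarrow> real" and \<gamma> :: "real \<Rightarrow> 'a"
  assumes \<gamma>: "M-lipschitz_on {0..1} \<gamma>" and e: "e > 0" and B: "B \<ge> 0"
    and local: "\<And>t z. t \<in> {0..1} \<Longrightarrow> dist z (\<gamma> t) < e \<Longrightarrow> \<bar>\<phi> z - \<phi> (\<gamma> t)\<bar> \<le> B * dist z (\<gamma> t)"
  shows "\<bar>\<phi> (\<gamma> 1) - \<phi> (\<gamma> 0)\<bar> \<le> B * M"
proof -
  obtain n :: nat where n: "M < real n * e" using ex_less_of_nat_mult[OF e] by blast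
  have n0: "n > 0" using n lipschitz_on_nonneg[OF \<gamma>] by (cases n) auto
  have "\<bar>\<phi> (\<gamma> (i / n)) - \<phi> (\<gamma> 0)\<bar> \<le> B * M * i / n" if "i \<le> n" for i
    using that
  proof (induction i)
    case (Suc i)
    let ?s = "real i / n" and ?t = "real (Suc i) / n"
    have st: "?s \<in> {0..1}" "?t \<in> {0..1}" using Suc.prems n0 by auto
    have "dist (\<gamma> ?t) (\<gamma> ?s) \<le> M * dist ?t ?s" by (rule lipschitz_onD[OF \<gamma> st(2,1)])
    also have "M * dist ?t ?s = M / n" using n0 by (simp add: dist_real_def divide_simps)
    finally have step: "dist (\<gamma> ?t) (\<gamma> ?s) \<le> M / n" .
    moreover have "M / n < e" using n n0 by (simp add: divide_less_eq mult.commute)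
    ultimately have "\<bar>\<phi> (\<gamma> ?t) - \<phi> (\<gamma> ?s)\<bar> \<le> B * dist (\<gamma> ?t) (\<gamma> ?s)"
      by (intro local st) auto
    also have "\<dots> \<le> B * (M / n)" using step B by (rule mult_left_mono)
    finally have "\<bar>\<phi> (\<gamma> ?t) - \<phi> (\<gamma> 0)\<bar> \<le> B * M * i / n + B * (M / n)"
      using Suc by simp
    also have "\<dots> = B * M * Suc i / n" by (simp add: add_divide_distrib algebra_simps)
    finally show ?case .
  qed simp
  from this[of n] show ?thesis using n0 by simp
qed

lemma mean_value_grad_ball:
  fixes f :: "'a::euclidean_space \<Rightarrow> real"
  assumes f: "\<And>w. w \<in> ball a \<rho> \<Longrightarrow> f differentiable (at w)"
    and B: "\<And>w. w \<in> ball a \<rho> \<Longrightarrow> norm (grad f w - g) \<le> B" and z: "z \<in> ball a \<rho>"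
  shows "\<bar>(f z - g \<bullet> z) - (f a - g \<bullet> a)\<bar> \<le> B * dist z a"
proof -
  have \<rho>: "0 < \<rho>" using z zero_le_dist[of a z] by (simp only: mem_ball)
  define \<phi> where "\<phi> w = f w - g \<bullet> w" for w
  have "(\<phi> has_derivative (\<lambda>v. (grad f w - g) \<bullet> v)) (at w within ball a \<rho>)" if "w \<in> ball a \<rho>" for w
  proof -
    have "(\<phi> has_derivative (\<lambda>v. grad f w \<bullet> v - g \<bullet> v)) (at w)"
      unfolding \<phi>_def using has_derivative_grad[OF f[OF that]] by (auto intro!: derivative_eq_intros)
    then show ?thesis by (simp add: inner_diff_left has_derivative_at_withinI)
  qed
  moreover have "onorm (\<lambda>v. (grad f w - g) \<bullet> v) \<le> B" if "w \<in> ball a \<rho>" for w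
  proof (rule onorm_le)
    fix v
    have "norm ((grad f w - g) \<bullet> v) \<le> norm (grad f w - g) * norm v" by (simp add: Cauchy_Schwarz_ineq2)
    also have "\<dots> \<le> B * norm v" using B[OF that] by (intro mult_right_mono) auto
    finally show "norm ((grad f w - g) \<bullet> v) \<le> B * norm v" .
  qed
  ultimately have "norm (\<phi> z - \<phi> a) \<le> B * norm (z - a)"
    by (rule differentiable_bound[OF convex_ball]) (use z \<rho> in auto)
  then show ?thesis by (simp add: \<phi>_def dist_norm)
qed

lemma lipschitz_curve_taylor_bound:
  fixes f :: "'a::euclidean_space \<Rightarrow> real" and \<gamma> :: "real \<Rightarrow> 'a"
  assumes \<Omega>: "open \<Omega>" and f: "\<And>z. z \<in> \<Omega> \<Longrightarrow> f differentiable (at z)"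
    and \<gamma>: "\<gamma> 0 = x" "\<gamma> 1 = y" "\<gamma> ` {0..1} \<subseteq> \<Omega>" "M-lipschitz_on {0..1} \<gamma>" "M > 0"
    and B: "\<And>z. z \<in> \<Omega> \<Longrightarrow> dist z x < 2 * M \<Longrightarrow> norm (grad f z - g) \<le> B"
  shows "\<bar>f y - f x - g \<bullet> (y - x)\<bar> \<le> B * M"
proof -
  have "compact (\<gamma> ` {0..1})"
    using lipschitz_on_continuous_on[OF \<gamma>(4)] by (intro compact_continuous_image) auto
  then obtain e where e: "e > 0" "(\<Union>z\<in>\<gamma> ` {0..1}. ball z e) \<subseteq> \<Omega>"
    using compact_subset_open_imp_ball_epsilon_subset[OF _ \<Omega> \<gamma>(3)] by metis
  have "x \<in> \<Omega>" using \<gamma>(1,3) by force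
  then have "norm (grad f x - g) \<le> B" using B \<gamma>(5) by simp
  then have B0: "B \<ge> 0" using norm_ge_zero order_trans by blast
  have "\<bar>(f z - g \<bullet> z) - (f (\<gamma> t) - g \<bullet> \<gamma> t)\<bar> \<le> B * dist z (\<gamma> t)"
    if t: "t \<in> {0..1}" and z: "dist z (\<gamma> t) < min e M" for t z
  proof (rule mean_value_grad_ball)
    have "ball (\<gamma> t) (min e M) \<subseteq> ball (\<gamma> t) e" by (rule subset_ball) simp
    also have "\<dots> \<subseteq> \<Omega>" using e(2) t by blast
    finally have U: "ball (\<gamma> t) (min e M) \<subseteq> \<Omega>" .
    then show "f differentiable (at w)" if "w \<in> ball (\<gamma> t) (min e M)" for w using f that by blast
    have "dist (\<gamma> t) x \<le> M * dist t 0"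
      using lipschitz_onD[OF \<gamma>(4) t, of 0] \<gamma>(1) by simp
    also have "\<dots> \<le> M" using t lipschitz_on_nonneg[OF \<gamma>(4)] by (simp add: mult_left_le)
    finally show "norm (grad f w - g) \<le> B" if "w \<in> ball (\<gamma> t) (min e M)" for w
      using that U B dist_triangle[of w x "\<gamma> t"] by (auto simp: dist_commute)
    show "z \<in> ball (\<gamma> t) (min e M)" using z by (simp add: dist_commute)
  qed
  then have "\<bar>(f (\<gamma> 1) - g \<bullet> \<gamma> 1) - (f (\<gamma> 0) - g \<bullet> \<gamma> 0)\<bar> \<le> B * M"
    using e(1) \<gamma>(5) B0 by (intro lipschitz_curve_increment_le[OF \<gamma>(4), of "min e M"]) auto
  then show ?thesis using \<gamma>(1,2) by (simp add: inner_diff_right)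
qed

locale quasiconvex_domain =
  fixes \<Omega> :: "'a::euclidean_space set" and r L :: real
  assumes open_domain: "open \<Omega>" and r_pos: "0 < r" and L_ge_1: "1 \<le> L"
    and curve_exists: "\<And>x y. x \<in> \<Omega> \<Longrightarrow> y \<in> \<Omega> \<Longrightarrow> dist x y \<le> r \<Longrightarrow>
      \<exists>\<gamma>::real \<Rightarrow> 'a. \<gamma> 0 = x \<and> \<gamma> 1 = y \<and> \<gamma> ` {0..1} \<subseteq> \<Omega> \<and> (L * dist x y)-lipschitz_on {0..1} \<gamma>"

lemma unif_loc_quasiconvex_imp_quasiconvex_domain:
  fixes \<Omega> :: "'a::euclidean_space set"
  assumes "open \<Omega>" "unif_loc_quasiconvex \<Omega>"
  shows "\<exists>r L. quasiconvex_domain \<Omega> r L"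
proof -
  from assms(2) obtain r L where "0 < r" "1 \<le> L" and "\<forall>x\<in>\<Omega>. \<forall>y\<in>\<Omega>. dist x y \<le> r \<longrightarrow>
       (\<exists>\<gamma>::real \<Rightarrow> 'a. \<gamma> 0 = x \<and> \<gamma> 1 = y \<and> \<gamma> ` {0..1} \<subseteq> \<Omega> \<and> (L * dist x y)-lipschitz_on {0..1} \<gamma>)"
    unfolding unif_loc_quasiconvex_def by (elim exE conjE) (rule that)
  then have "quasiconvex_domain \<Omega> r L" using assms(1) by unfold_locales auto
  then show ?thesis by blast
qed

context quasiconvex_domain
begin

lemma taylor_remainder_le:
  fixes f :: "'a \<Rightarrow> real"
  assumes f: "\<And>z. z \<in> \<Omega> \<Longrightarrow> f differentiable (at z)" and xy: "x \<in> \<Omega>" "y \<in> \<Omega>" "dist x y \<le> r"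
    and B: "\<And>z. z \<in> \<Omega> \<Longrightarrow> dist z x < 2 * L * dist x y \<Longrightarrow> norm (grad f z - grad f x) \<le> B"
  shows "\<bar>f y - f x - grad f x \<bullet> (y - x)\<bar> \<le> B * L * dist x y"
proof (cases "x = y")
  case False
  obtain \<gamma> :: "real \<Rightarrow> 'a" where \<gamma>: "\<gamma> 0 = x" "\<gamma> 1 = y" "\<gamma> ` {0..1} \<subseteq> \<Omega>"
    "(L * dist x y)-lipschitz_on {0..1} \<gamma>"
    using curve_exists[OF xy] by blast
  have "\<bar>f y - f x - grad f x \<bullet> (y - x)\<bar> \<le> B * (L * dist x y)"
    using False L_ge_1 B
    by (intro lipschitz_curve_taylor_bound[OF open_domain f \<gamma>]) (auto simp: mult.assoc)
  then show ?thesis by (simp add: mult.assoc)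
qed simp

lemma taylor_remainder_uniform:
  fixes f :: "'a \<Rightarrow> real"
  assumes f: "\<And>z. z \<in> \<Omega> \<Longrightarrow> f differentiable (at z)" "uniformly_continuous_on \<Omega> (grad f)"
    and e: "e > 0"
  obtains \<eta> where "\<eta> > 0"
    "\<And>x y. x \<in> \<Omega> \<Longrightarrow> y \<in> \<Omega> \<Longrightarrow> dist x y < \<eta> \<Longrightarrow> \<bar>f y - f x - grad f x \<bullet> (y - x)\<bar> \<le> e * dist x y"
proof -
  have "e / L > 0" using e L_ge_1 by simp
  then obtain d where d: "d > 0" "\<And>x z. x \<in> \<Omega> \<Longrightarrow> z \<in> \<Omega> \<Longrightarrow> dist z x < d \<Longrightarrow> dist (grad f z) (grad f x) < e / L"
    using f(2) unfolding uniformly_continuous_on_def by metis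
  show ?thesis
  proof (rule that)
    show "min r (d / (2 * L)) > 0" using r_pos d(1) L_ge_1 by simp
    fix x y assume xy: "x \<in> \<Omega>" "y \<in> \<Omega>" "dist x y < min r (d / (2 * L))"
    then have "2 * L * dist x y < d" using L_ge_1 by (simp add: field_simps)
    then have "\<bar>f y - f x - grad f x \<bullet> (y - x)\<bar> \<le> e / L * L * dist x y"
      using xy d(2)[OF xy(1)] by (intro taylor_remainder_le[OF f(1)]) (auto simp: dist_norm less_imp_le)
    then show "\<bar>f y - f x - grad f x \<bullet> (y - x)\<bar> \<le> e * dist x y" using L_ge_1 by simp
  qed
qed

lemma taylor_remainder_bound:
  fixes f :: "'a \<Rightarrow> real"
  assumes f: "\<And>z. z \<in> \<Omega> \<Longrightarrow> f differentiable (at z)"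
    and M: "\<And>z. z \<in> \<Omega> \<Longrightarrow> \<bar>f z\<bar> \<le> M" "\<And>z. z \<in> \<Omega> \<Longrightarrow> norm (grad f z) \<le> M"
    and xy: "x \<in> \<Omega>" "y \<in> \<Omega>"
  shows "\<bar>f y - f x - grad f x \<bullet> (y - x)\<bar> \<le> (2 * L + 2 / r + 1) * M * dist x y"
proof -
  have M0: "M \<ge> 0" using M(1)[OF xy(1)] by linarith
  have sum: "(2 * L + 2 / r + 1) * M * dist x y = 2 * M * L * dist x y + 2 / r * M * dist x y + M * dist x y"
    by (simp add: algebra_simps)
  show ?thesis
  proof (cases "dist x y \<le> r")
    case True
    have "norm (grad f z - grad f x) \<le> 2 * M" if "z \<in> \<Omega>" for z
      using norm_triangle_ineq4[of "grad f z" "grad f x"] M(2)[OF that] M(2)[OF xy(1)] by linarith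
    then have "\<bar>f y - f x - grad f x \<bullet> (y - x)\<bar> \<le> 2 * M * L * dist x y"
      by (intro taylor_remainder_le[OF f xy True])
    moreover have "0 \<le> 2 / r * M * dist x y" "0 \<le> M * dist x y" using M0 r_pos by simp_all
    ultimately show ?thesis unfolding sum by linarith
  next
    case False
    have "\<bar>grad f x \<bullet> (y - x)\<bar> \<le> norm (grad f x) * norm (y - x)" by (rule Cauchy_Schwarz_ineq2)
    also have "\<dots> \<le> M * dist x y"
      using M(2)[OF xy(1)] by (simp add: dist_norm norm_minus_commute mult_right_mono)
    finally have "\<bar>grad f x \<bullet> (y - x)\<bar> \<le> M * dist x y" .
    moreover have "2 * M * 1 \<le> 2 * M * (dist x y / r)" using False r_pos M0 by (intro mult_left_mono) auto
    moreover have "0 \<le> 2 * M * L * dist x y" using L_ge_1 M0 by simp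
    moreover have "\<bar>f y - f x - grad f x \<bullet> (y - x)\<bar> \<le> \<bar>f y\<bar> + \<bar>f x\<bar> + \<bar>grad f x \<bullet> (y - x)\<bar>" by linarith
    ultimately show ?thesis unfolding sum using M(1)[OF xy(1)] M(1)[OF xy(2)] by (simp add: field_simps)
  qed
qed

end

section \<open>Continuous extension to the closure\<close>

definition closure_extension :: "'a::topological_space set \<Rightarrow> ('a \<Rightarrow> 'b::t2_space) \<Rightarrow> 'a \<Rightarrow> 'b" where
  "closure_extension X h x = (if x \<in> X then h x else Lim (at x within X) h)"

lemma closure_extension_eq [simp]: "x \<in> X \<Longrightarrow> closure_extension X h x = h x"
  by (simp add: closure_extension_def)

lemma
  fixes h :: "'a::metric_space \<Rightarrow> 'b::complete_space"
  assumes "uniformly_continuous_on X h"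
  shows tendsto_closure_extension:
      "x \<in> closure X \<Longrightarrow> (h \<longlongrightarrow> closure_extension X h x) (at x within X)"
    and continuous_on_closure_extension: "continuous_on (closure X) (closure_extension X h)"
proof -
  obtain g where g: "uniformly_continuous_on (closure X) g" "\<And>x. x \<in> X \<Longrightarrow> h x = g x"
    using uniformly_continuous_on_extension_on_closure[OF assms] by metis
  have gc: "continuous_on (closure X) g" using g(1) uniformly_continuous_imp_continuous by blast
  have hg: "(h \<longlongrightarrow> g x) (at x within X)" if "x \<in> closure X" for x
  proof -
    have "(g \<longlongrightarrow> g x) (at x within closure X)" using gc that by (simp add: continuous_on_def)
    then have "(g \<longlongrightarrow> g x) (at x within X)" by (rule tendsto_within_subset) (rule closure_subset)
    then show ?thesis by (rule Lim_transform_within[where d=1]) (auto simp: g(2))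
  qed
  have eq: "closure_extension X h x = g x" if "x \<in> closure X" for x
  proof (cases "x \<in> X")
    case False
    then have "x islimpt X" using that unfolding closure_def by blast
    then show ?thesis
      using False hg[OF that] by (simp add: closure_extension_def trivial_limit_within tendsto_Lim)
  qed (simp add: g(2))
  show "(h \<longlongrightarrow> closure_extension X h x) (at x within X)" if "x \<in> closure X"
    using hg[OF that] eq[OF that] by simp
  show "continuous_on (closure X) (closure_extension X h)"
    using gc by (rule continuous_on_eq) (simp add: eq)
qed

lemma norm_closure_extension_le:
  fixes h :: "'a::metric_space \<Rightarrow> 'b::{complete_space, real_normed_vector}"
  assumes "uniformly_continuous_on X h" "\<And>x. x \<in> X \<Longrightarrow> norm (h x) \<le> B" "x \<in> closure X"
  shows "norm (closure_extension X h x) \<le> B"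
proof (cases "x \<in> X")
  case False
  then have "\<not> trivial_limit (at x within X)"
    using assms(3) by (simp add: closure_def trivial_limit_within)
  then show ?thesis
    using assms by (intro Lim_norm_ubound[OF _ tendsto_closure_extension]) (auto simp: eventually_at_filter)
qed (simp add: assms(2))

lemma taylor_estimate_closure_extension:
  fixes f :: "'a::euclidean_space \<Rightarrow> real" and g :: "'a \<Rightarrow> 'a"
  assumes f: "uniformly_continuous_on X f" and g: "uniformly_continuous_on X g"
    and est: "\<And>x y. x \<in> X \<Longrightarrow> y \<in> X \<Longrightarrow> dist x y < \<eta> \<Longrightarrow> \<bar>f y - f x - g x \<bullet> (y - x)\<bar> \<le> e * dist x y"
    and xy: "x \<in> closure X" "y \<in> closure X" "dist x y < \<eta>"
  shows "\<bar>closure_extension X f y - closure_extension X f x - closure_extension X g x \<bullet> (y - x)\<bar>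
           \<le> e * dist x y"
proof -
  let ?F = "closure_extension X f" and ?G = "closure_extension X g"
  obtain xs where xs: "\<And>n. xs n \<in> X" "xs \<longlonglongrightarrow> x" using closure_sequential[THEN iffD1, OF xy(1)] by blast
  obtain ys where ys: "\<And>n. ys n \<in> X" "ys \<longlonglongrightarrow> y" using closure_sequential[THEN iffD1, OF xy(2)] by blast
  have in_closure: "\<forall>\<^sub>F n in sequentially. xs n \<in> closure X" "\<forall>\<^sub>F n in sequentially. ys n \<in> closure X"
    using xs(1) ys(1) closure_subset[of X] by (simp_all add: subset_eq)
  have "(\<lambda>n. ?F (xs n)) \<longlonglongrightarrow> ?F x" "(\<lambda>n. ?F (ys n)) \<longlonglongrightarrow> ?F y" "(\<lambda>n. ?G (xs n)) \<longlonglongrightarrow> ?G x"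
    by (rule continuous_on_tendsto_compose[OF continuous_on_closure_extension[OF f] xs(2) xy(1) in_closure(1)],
        rule continuous_on_tendsto_compose[OF continuous_on_closure_extension[OF f] ys(2) xy(2) in_closure(2)],
        rule continuous_on_tendsto_compose[OF continuous_on_closure_extension[OF g] xs(2) xy(1) in_closure(1)])
  then have lim: "(\<lambda>n. f (xs n)) \<longlonglongrightarrow> ?F x" "(\<lambda>n. f (ys n)) \<longlonglongrightarrow> ?F y" "(\<lambda>n. g (xs n)) \<longlonglongrightarrow> ?G x"
    using xs(1) ys(1) by simp_all
  have "(\<lambda>n. \<bar>f (ys n) - f (xs n) - g (xs n) \<bullet> (ys n - xs n)\<bar> - e * dist (xs n) (ys n))
      \<longlonglongrightarrow> \<bar>?F y - ?F x - ?G x \<bullet> (y - x)\<bar> - e * dist x y"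
    by (intro tendsto_diff tendsto_rabs tendsto_mult tendsto_const tendsto_inner tendsto_dist lim xs(2) ys(2))
  moreover have "\<forall>\<^sub>F n in sequentially. dist (xs n) (ys n) < \<eta>"
    using order_tendstoD(2)[OF tendsto_dist[OF xs(2) ys(2)] xy(3)] .
  then have "\<forall>\<^sub>F n in sequentially. \<bar>f (ys n) - f (xs n) - g (xs n) \<bullet> (ys n - xs n)\<bar> - e * dist (xs n) (ys n) \<le> 0"
  proof eventually_elim
    case (elim n)
    show ?case using est[OF xs(1) ys(1) elim] by simp
  qed
  ultimately have "\<bar>?F y - ?F x - ?G x \<bullet> (y - x)\<bar> - e * dist x y \<le> 0"
    by (rule tendsto_upperbound) (rule sequentially_bot)
  then show ?thesis by simp
qed

lemma closure_extension_cong: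
  "(\<And>y. y \<in> X \<Longrightarrow> f y = g y) \<Longrightarrow> closure_extension X f = closure_extension X g"
  unfolding closure_extension_def
  by (intro ext if_cong refl Lim_cong) (auto simp: eventually_at_filter)

lemma closure_extension_limit:
  fixes h :: "'a::metric_space \<Rightarrow> 'b::t2_space"
  assumes "x \<in> closure X" "(h \<longlongrightarrow> l) (at x within X)" "x \<in> X \<Longrightarrow> h x = l"
  shows "closure_extension X h x = l"
proof (cases "x \<in> X")
  case False
  then have "x islimpt X" using assms(1) by (simp add: closure_def)
  then show ?thesis using False assms(2) by (simp add: closure_extension_def trivial_limit_within tendsto_Lim)
qed (simp add: assms(3))

lemma closure_extension_add:
  fixes f g :: "'a::metric_space \<Rightarrow> 'b::{complete_space, real_normed_vector}"
  assumes "uniformly_continuous_on X f" "uniformly_continuous_on X g" "x \<in> closure X"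
  shows "closure_extension X (\<lambda>y. f y + g y) x = closure_extension X f x + closure_extension X g x"
  using assms by (intro closure_extension_limit tendsto_add tendsto_closure_extension) auto

lemma closure_extension_scaleR:
  fixes f :: "'a::metric_space \<Rightarrow> 'b::{complete_space, real_normed_vector}"
  assumes "uniformly_continuous_on X f" "x \<in> closure X"
  shows "closure_extension X (\<lambda>y. c *\<^sub>R f y) x = c *\<^sub>R closure_extension X f x"
  using assms by (intro closure_extension_limit tendsto_scaleR tendsto_const tendsto_closure_extension) auto

section \<open>A Whitney partition of unity\<close>

locale whitney_cover =
  fixes \<Omega> :: "'a::euclidean_space set"
  assumes bounded: "bounded \<Omega>" and nonempty: "\<Omega> \<noteq> {}"
begin

abbreviation K :: "'a set" where "K \<equiv> closure \<Omega>"

definition \<delta> :: "'a \<Rightarrow> real" where "\<delta> x = infdist x K"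

text \<open>The bumps \<open>\<psi> k\<close> for \<open>k \<in> cells\<close> play the role of Whitney cubes: the bump of the cell
  \<open>(j, v)\<close> has radius \<open>2 * DIM('a) * 2\<^sup>j\<close>, comparable to the distance from \<open>v\<close> to \<open>K\<close>.\<close>

definition cells :: "(int \<times> 'a) set" where
  "cells = {(j, v). v \<in> grid (dyadic j) \<and>
     4 * real DIM('a) * dyadic j \<le> \<delta> v \<and> \<delta> v \<le> 11 * real DIM('a) * dyadic j}"

definition \<psi> :: "int \<times> 'a \<Rightarrow> 'a \<Rightarrow> real" where
  "\<psi> k = bump (2 * real DIM('a) * dyadic (fst k)) (snd k)"

definition \<psi>_grad :: "int \<times> 'a \<Rightarrow> 'a \<Rightarrow> 'a" where
  "\<psi>_grad k = bump_grad (2 * real DIM('a) * dyadic (fst k)) (snd k)"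

definition active :: "'a \<Rightarrow> (int \<times> 'a) set" where
  "active y = {k \<in> cells. \<psi> k y \<noteq> 0}"

definition \<psi>_sum :: "'a \<Rightarrow> real" where
  "\<psi>_sum y = (\<Sum>k\<in>active y. \<psi> k y)"

definition anchor :: "int \<times> 'a \<Rightarrow> 'a" where
  "anchor k = (SOME p. p \<in> \<Omega> \<and> dist p (snd k) < 2 * \<delta> (snd k))"

definition overlap_bound :: nat where
  "overlap_bound = 3 * (4 * DIM('a) + 1) ^ DIM('a)"

lemma compact_K: "compact K"
  using bounded by (simp add: compact_closure)

lemma \<delta>_nonneg: "0 \<le> \<delta> x"
  by (simp add: \<delta>_def infdist_nonneg)

lemma \<delta>_pos: "x \<notin> K \<Longrightarrow> 0 < \<delta> x"
  unfolding \<delta>_def by (rule infdist_pos_not_in_closed) (use nonempty in auto)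

lemma \<delta>_eq_0: "x \<in> K \<Longrightarrow> \<delta> x = 0"
  by (simp add: \<delta>_def)

lemma \<delta>_lipschitz: "\<bar>\<delta> x - \<delta> y\<bar> \<le> dist x y"
  unfolding \<delta>_def by (rule infdist_triangle_abs)

lemma \<delta>_le_dist: "z \<in> K \<Longrightarrow> \<delta> x \<le> dist x z"
  unfolding \<delta>_def by (rule infdist_le)

lemma obtain_nearest_point:
  obtains z where "z \<in> K" "\<delta> x = dist x z"
  using infdist_attains_inf[of K x] nonempty by (auto simp: \<delta>_def)

lemma anchor:
  assumes "k \<in> cells"
  shows "anchor k \<in> \<Omega>" "dist (anchor k) (snd k) < 2 * \<delta> (snd k)"
proof -
  obtain j v where k: "k = (j, v)" by fastforce
  have "0 < 4 * real DIM('a) * dyadic j" using real_DIM_ge_1[where 'a='a] by simp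
  also have "\<dots> \<le> \<delta> v" using assms k by (simp add: cells_def)
  finally have pos: "0 < \<delta> v" .
  obtain z where z: "z \<in> K" "\<delta> v = dist v z" by (rule obtain_nearest_point)
  then obtain p where "p \<in> \<Omega>" "dist p z < \<delta> v" using pos by (metis closure_approachable)
  then have "\<exists>p. p \<in> \<Omega> \<and> dist p (snd k) < 2 * \<delta> (snd k)"
    using z dist_triangle[of p v z] k by (auto simp: dist_commute)
  then show "anchor k \<in> \<Omega>" "dist (anchor k) (snd k) < 2 * \<delta> (snd k)"
    unfolding anchor_def by (metis (mono_tags, lifting) someI_ex)+
qed

lemma active_cell:
  assumes "k \<in> active y"
  defines "a \<equiv> real DIM('a) * dyadic (fst k)"
  shows "k \<in> cells" "dist y (snd k) < 2 * a" "2 * a < \<delta> y" "\<delta> y < 13 * a"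
    "dist y (anchor k) < 12 * \<delta> y"
proof -
  show k: "k \<in> cells" using assms by (simp add: active_def)
  have cell: "4 * a \<le> \<delta> (snd k)" "\<delta> (snd k) \<le> 11 * a"
    using k by (auto simp: cells_def a_def mult.assoc)
  have "0 < 2 * a" using real_DIM_ge_1[where 'a='a] by (simp add: a_def)
  moreover have "bump (2 * a) (snd k) y \<noteq> 0"
    using assms(1) by (simp add: active_def \<psi>_def a_def mult.assoc)
  ultimately show dv: "dist y (snd k) < 2 * a" by (rule dist_less_if_bump_nonzero)
  then show "2 * a < \<delta> y" "\<delta> y < 13 * a"
    using \<delta>_lipschitz[of y "snd k"] cell by linarith+
  then show "dist y (anchor k) < 12 * \<delta> y"
    using anchor(2)[OF k] dist_triangle[of y "anchor k" "snd k"] dv cell \<delta>_lipschitz[of y "snd k"]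
    by (simp add: dist_commute)
qed

lemma active_subset:
  fixes y :: 'a
  defines "t \<equiv> \<delta> y / (13 * real DIM('a))"
  shows "active y \<subseteq> (SIGMA j:{j. t \<le> dyadic j \<and> dyadic j < 8 * t}.
                        grid (dyadic j) \<inter> ball y (real (2 * DIM('a)) * dyadic j))"
proof safe
  fix j v assume k: "(j, v) \<in> active y"
  have d: "13 * real DIM('a) > 0" using real_DIM_ge_1[where 'a='a] by simp
  show "t \<le> dyadic j" "dyadic j < 8 * t"
    using active_cell(3,4)[OF k] d by (simp_all add: t_def field_simps)
  show "v \<in> grid (dyadic j)" using active_cell(1)[OF k] by (simp add: cells_def)
  show "v \<in> ball y (real (2 * DIM('a)) * dyadic j)"
    using active_cell(2)[OF k] by (simp add: mult.assoc)
qed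

lemma finite_card_active:
  assumes "y \<notin> K"
  shows "finite (active y)" "card (active y) \<le> overlap_bound"
proof -
  define t where "t = \<delta> y / (13 * real DIM('a))"
  define J where "J = {j. t \<le> dyadic j \<and> dyadic j < 8 * t}"
  define G where "G j = grid (dyadic j) \<inter> ball y (real (2 * DIM('a)) * dyadic j)" for j
  have t: "t > 0" using \<delta>_pos[OF assms] real_DIM_ge_1[where 'a='a] by (simp add: t_def)
  have "J \<subseteq> {j. t \<le> dyadic j \<and> dyadic j \<le> 8 * t}" by (auto simp: J_def)
  then have J: "finite J" "card J \<le> 3"
    using finite_subset finite_dyadic_between[OF t] card_dyadic_between_le_3[OF t] by (auto simp: J_def)
  have G: "finite (G j)" "card (G j) \<le> (4 * DIM('a) + 1) ^ DIM('a)" for j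
    using finite_card_grid_ball[OF dyadic_pos[of j], where y=y and n="2 * DIM('a)"] by (simp_all add: G_def)
  have "card (Sigma J G) = (\<Sum>j\<in>J. card (G j))" using J G by (intro card_SigmaI) auto
  also have "\<dots> \<le> card J * (4 * DIM('a) + 1) ^ DIM('a)"
    using sum_bounded_above[of J "\<lambda>j. card (G j)"] G(2) by simp
  also have "\<dots> \<le> overlap_bound" using J(2) by (simp add: overlap_bound_def)
  finally have "card (Sigma J G) \<le> overlap_bound" .
  moreover have "active y \<subseteq> Sigma J G" unfolding J_def G_def t_def by (rule active_subset)
  moreover have "finite (Sigma J G)" using J G by (intro finite_SigmaI)
  ultimately show "finite (active y)" "card (active y) \<le> overlap_bound"
    using finite_subset card_mono order_trans by metis+
qed

lemma \<psi>_nonneg: "0 \<le> \<psi> k x"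
  by (simp add: \<psi>_def bump_nonneg)

lemma \<psi>_sum_ge:
  assumes "y \<notin> K"
  shows "9/16 \<le> \<psi>_sum y"
proof -
  have "\<delta> y / (5 * real DIM('a)) > 0" using \<delta>_pos[OF assms] real_DIM_ge_1[where 'a='a] by simp
  then obtain j where j: "dyadic j \<le> \<delta> y / (5 * real DIM('a))" "\<delta> y / (5 * real DIM('a)) < 2 * dyadic j"
    by (rule obtain_dyadic_between)
  obtain v where v: "v \<in> grid (dyadic j)" "dist y v \<le> real DIM('a) * dyadic j"
    by (rule obtain_grid_point_near[OF dyadic_pos])
  define a where "a = real DIM('a) * dyadic j"
  have "5 * a \<le> \<delta> y" "\<delta> y < 10 * a"
    using j real_DIM_ge_1[where 'a='a] by (simp_all add: a_def field_simps)
  then have "4 * a \<le> \<delta> v" "\<delta> v \<le> 11 * a" using v(2) \<delta>_lipschitz[of y v] by (simp_all add: a_def)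
  then have "(j, v) \<in> cells" using v(1) by (simp add: cells_def a_def mult.assoc)
  moreover have big: "9/16 \<le> \<psi> (j, v) y"
    unfolding \<psi>_def using v(2) real_DIM_ge_1[where 'a='a] by (intro bump_ge_9_16) auto
  ultimately have "(j, v) \<in> active y" by (auto simp: active_def)
  then have "\<psi> (j, v) y \<le> \<psi>_sum y"
    unfolding \<psi>_sum_def by (rule member_le_sum) (simp_all add: \<psi>_nonneg finite_card_active(1)[OF assms])
  then show ?thesis using big by simp
qed

lemma \<psi>_sum_pos: "y \<notin> K \<Longrightarrow> 0 < \<psi>_sum y"
  using \<psi>_sum_ge[of y] by linarith

lemma active_nonempty: "y \<notin> K \<Longrightarrow> active y \<noteq> {}"
  using \<psi>_sum_pos[of y] by (auto simp: \<psi>_sum_def)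

lemma sum_norm_\<psi>_grad_le:
  assumes "y \<notin> K"
  shows "(\<Sum>k\<in>active y. norm (\<psi>_grad k y)) \<le> 26 * overlap_bound / \<delta> y"
proof -
  have "norm (\<psi>_grad k y) \<le> 26 / \<delta> y" if k: "k \<in> active y" for k
  proof -
    define a where "a = real DIM('a) * dyadic (fst k)"
    have a: "a > 0" using real_DIM_ge_1[where 'a='a] by (simp add: a_def)
    have "norm (\<psi>_grad k y) \<le> 4 / (2 * a)"
      unfolding \<psi>_grad_def a_def mult.assoc using a[unfolded a_def] by (intro norm_bump_grad_le) simp
    also have "\<dots> \<le> 26 / \<delta> y"
      using active_cell(4)[OF k] \<delta>_pos[OF assms] a by (simp add: a_def divide_simps)
    finally show ?thesis .
  qed
  then have "(\<Sum>k\<in>active y. norm (\<psi>_grad k y)) \<le> card (active y) * (26 / \<delta> y)"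
    by (rule sum_bounded_above)
  also have "\<dots> \<le> overlap_bound * (26 / \<delta> y)"
    using finite_card_active(2)[OF assms] \<delta>_pos[OF assms] by (intro mult_right_mono) auto
  finally show ?thesis by (simp add: mult.commute)
qed

definition local_cells :: "'a \<Rightarrow> (int \<times> 'a) set" where
  "local_cells x = (\<Union>y\<in>ball x (\<delta> x / 2). active y)"

lemma not_in_K_if_near:
  assumes "x \<notin> K" "dist x y < \<delta> x / 2"
  shows "y \<notin> K" "\<delta> x / 2 < \<delta> y" "\<delta> y < 3 / 2 * \<delta> x"
proof -
  show "\<delta> x / 2 < \<delta> y" "\<delta> y < 3 / 2 * \<delta> x"
    using \<delta>_lipschitz[of y x] assms(2) by (simp_all add: dist_commute)
  then show "y \<notin> K" using \<delta>_pos[OF assms(1)] \<delta>_eq_0[of y] by force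
qed

lemma finite_local_cells:
  assumes "x \<notin> K"
  shows "finite (local_cells x)"
proof -
  define J where "J = {j. \<delta> x / (26 * real DIM('a)) \<le> dyadic j \<and> dyadic j \<le> \<delta> x / real DIM('a)}"
  have d: "real DIM('a) > 0" using real_DIM_ge_1[where 'a='a] by simp
  have "local_cells x \<subseteq> (SIGMA j:J. grid (dyadic j) \<inter> ball x (real (15 * DIM('a)) * dyadic j))"
  proof
    fix k assume "k \<in> local_cells x"
    then obtain y where y: "dist x y < \<delta> x / 2" and k: "k \<in> active y" by (auto simp: local_cells_def)
    note near = not_in_K_if_near[OF assms y]
    note cell = active_cell[OF k]
    have "fst k \<in> J" using near(2,3) cell(3,4) d by (simp add: J_def field_simps)
    moreover have "snd k \<in> grid (dyadic (fst k))" using cell(1) by (simp add: cells_def split: prod.splits)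
    moreover have "dist x (snd k) < 15 * (real DIM('a) * dyadic (fst k))"
      using dist_triangle[of x "snd k" y] y near(2) cell(2,4) by linarith
    ultimately show "k \<in> (SIGMA j:J. grid (dyadic j) \<inter> ball x (real (15 * DIM('a)) * dyadic j))"
      by (cases k) (simp add: mult.assoc)
  qed
  moreover have "finite J"
    using d \<delta>_pos[OF assms] by (simp add: J_def finite_dyadic_between)
  then have "finite (SIGMA j:J. grid (dyadic j) \<inter> ball x (real (15 * DIM('a)) * dyadic j))"
    by (rule finite_SigmaI) (rule finite_card_grid_ball(1)[OF dyadic_pos])
  ultimately show ?thesis by (rule finite_subset)
qed

lemma active_subset_local_cells: "dist x y < \<delta> x / 2 \<Longrightarrow> active y \<subseteq> local_cells x"
  by (auto simp: local_cells_def)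

lemma local_cells_subset_cells: "local_cells x \<subseteq> cells"
  by (auto simp: local_cells_def active_def)

lemma sum_active_eq:
  assumes "finite F" "active y \<subseteq> F" "F \<subseteq> cells" "\<And>k. \<psi> k y = 0 \<Longrightarrow> h k = 0"
  shows "(\<Sum>k\<in>active y. h k) = (\<Sum>k\<in>F. h k)"
  using assms by (intro sum.mono_neutral_left) (auto simp: active_def)

lemma \<psi>_grad_eq_0: "\<psi> k y = 0 \<Longrightarrow> \<psi>_grad k y = 0"
  by (simp add: \<psi>_def \<psi>_grad_def bump_grad_eq_0)

lemma \<psi>_has_derivative: "(\<psi> k has_derivative (\<lambda>w. \<psi>_grad k x \<bullet> w)) (at x)"
  unfolding \<psi>_def \<psi>_grad_def using real_DIM_ge_1[where 'a='a] by (intro bump_has_derivative) simp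

lemma continuous_on_\<psi>: "continuous_on S (\<psi> k)"
  unfolding \<psi>_def using real_DIM_ge_1[where 'a='a] by (intro continuous_on_bump) simp

lemma continuous_on_\<psi>_grad: "continuous_on S (\<psi>_grad k)"
  unfolding \<psi>_grad_def using real_DIM_ge_1[where 'a='a] by (intro continuous_on_bump_grad) simp

definition blend :: "(int \<times> 'a \<Rightarrow> real) \<Rightarrow> (int \<times> 'a \<Rightarrow> 'a) \<Rightarrow> 'a \<Rightarrow> real" where
  "blend c g y = (\<Sum>k\<in>active y. \<psi> k y * (c k + g k \<bullet> y)) / \<psi>_sum y"

definition blend_grad :: "(int \<times> 'a \<Rightarrow> real) \<Rightarrow> (int \<times> 'a \<Rightarrow> 'a) \<Rightarrow> 'a \<Rightarrow> 'a" where
  "blend_grad c g y = (1 / \<psi>_sum y) *\<^sub>R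
     (\<Sum>k\<in>active y. \<psi> k y *\<^sub>R g k + (c k + g k \<bullet> y - blend c g y) *\<^sub>R \<psi>_grad k y)"

lemma blend_local:
  assumes "x \<notin> K" "dist x y < \<delta> x / 2"
  defines "s \<equiv> (\<Sum>k\<in>local_cells x. \<psi> k y)"
  shows "\<psi>_sum y = s"
    and "blend c g y = (\<Sum>k\<in>local_cells x. \<psi> k y * (c k + g k \<bullet> y)) / s"
    and "blend_grad c g y = (1 / s) *\<^sub>R (\<Sum>k\<in>local_cells x. \<psi> k y *\<^sub>R g k +
           (c k + g k \<bullet> y - (\<Sum>k\<in>local_cells x. \<psi> k y * (c k + g k \<bullet> y)) / s) *\<^sub>R \<psi>_grad k y)"
proof -
  note F = finite_local_cells[OF assms(1)] active_subset_local_cells[OF assms(2)] local_cells_subset_cells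
  show S: "\<psi>_sum y = s" unfolding \<psi>_sum_def s_def by (rule sum_active_eq[OF F]) simp
  show E: "blend c g y = (\<Sum>k\<in>local_cells x. \<psi> k y * (c k + g k \<bullet> y)) / s"
    unfolding blend_def S[symmetric] by (subst sum_active_eq[OF F]) auto
  show "blend_grad c g y = (1 / s) *\<^sub>R (\<Sum>k\<in>local_cells x. \<psi> k y *\<^sub>R g k +
           (c k + g k \<bullet> y - (\<Sum>k\<in>local_cells x. \<psi> k y * (c k + g k \<bullet> y)) / s) *\<^sub>R \<psi>_grad k y)"
    unfolding blend_grad_def E S by (subst sum_active_eq[OF F]) (auto simp: \<psi>_grad_eq_0)
qed

lemma blend_has_derivative:
  assumes x: "x \<notin> K"
  shows "(blend c g has_derivative (\<lambda>w. blend_grad c g x \<bullet> w)) (at x)"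
proof -
  let ?F = "local_cells x"
  define T where "T y = (\<Sum>k\<in>?F. \<psi> k y * (c k + g k \<bullet> y))" for y
  define s where "s y = (\<Sum>k\<in>?F. \<psi> k y)" for y
  define T' where "T' w = (\<Sum>k\<in>?F. \<psi> k x * (g k \<bullet> w) + (\<psi>_grad k x \<bullet> w) * (c k + g k \<bullet> x))" for w
  define s' where "s' w = (\<Sum>k\<in>?F. \<psi>_grad k x \<bullet> w)" for w
  have x0: "dist x x < \<delta> x / 2" using \<delta>_pos[OF x] by simp
  have sx: "s x > 0" using blend_local(1)[OF x x0] \<psi>_sum_pos[OF x] by (simp add: s_def)
  have "(T has_derivative T') (at x)"
    unfolding T_def T'_def by (auto intro!: derivative_eq_intros \<psi>_has_derivative)
  moreover have "(s has_derivative s') (at x)"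
    unfolding s_def s'_def by (auto intro!: derivative_eq_intros \<psi>_has_derivative)
  ultimately have "((\<lambda>y. T y / s y) has_derivative
      (\<lambda>w. - T x * (inverse (s x) * s' w * inverse (s x)) + T' w / s x)) (at x)"
    using sx by (intro has_derivative_divide) auto
  moreover have "- T x * (inverse (s x) * s' w * inverse (s x)) + T' w / s x = blend_grad c g x \<bullet> w" for w
  proof -
    have "blend_grad c g x \<bullet> w = (1 / s x) * ((\<Sum>k\<in>?F. \<psi> k x * (g k \<bullet> w)) +
          (\<Sum>k\<in>?F. (c k + g k \<bullet> x) * (\<psi>_grad k x \<bullet> w)) - (T x / s x) * s' w)"
      unfolding blend_local(3)[OF x x0] T_def[symmetric] s_def[symmetric] s'_def
      by (simp add: inner_sum_left inner_add_left sum.distrib left_diff_distrib sum_subtractf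
          sum_distrib_left)
    also have "\<dots> = - T x * (inverse (s x) * s' w * inverse (s x)) + T' w / s x"
      using sx by (simp add: T'_def sum.distrib field_simps mult.commute)
    finally show ?thesis by simp
  qed
  ultimately have "((\<lambda>y. T y / s y) has_derivative (\<lambda>w. blend_grad c g x \<bullet> w)) (at x)" by simp
  then show ?thesis
    by (rule has_derivative_transform_within_open[where s="ball x (\<delta> x / 2)"])
      (use x0 blend_local(2)[OF x] in \<open>auto simp: T_def s_def\<close>)
qed

lemma isCont_blend_grad:
  assumes x: "x \<notin> K"
  shows "isCont (blend_grad c g) x"
proof -
  let ?F = "local_cells x" and ?N = "ball x (\<delta> x / 2)"
  have s: "(\<Sum>k\<in>?F. \<psi> k y) \<noteq> 0" if "y \<in> ?N" for y
    using blend_local(1)[OF x] \<psi>_sum_pos not_in_K_if_near(1)[OF x] that by force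
  have "continuous_on ?N (\<lambda>y. (1 / (\<Sum>k\<in>?F. \<psi> k y)) *\<^sub>R (\<Sum>k\<in>?F. \<psi> k y *\<^sub>R g k +
      (c k + g k \<bullet> y - (\<Sum>k\<in>?F. \<psi> k y * (c k + g k \<bullet> y)) / (\<Sum>k\<in>?F. \<psi> k y)) *\<^sub>R \<psi>_grad k y))"
    using s by (intro continuous_intros continuous_on_\<psi> continuous_on_\<psi>_grad) auto
  then have "continuous_on ?N (blend_grad c g)"
    by (rule continuous_on_eq) (use blend_local(3)[OF x] in auto)
  then show ?thesis using \<delta>_pos[OF x] by (intro continuous_on_interior[of ?N]) (auto simp: interior_open)
qed

lemma blend_dist_le:
  assumes y: "y \<notin> K" and B: "\<And>k. k \<in> active y \<Longrightarrow> \<bar>c k + g k \<bullet> y - z\<bar> \<le> B"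
  shows "\<bar>blend c g y - z\<bar> \<le> B"
proof -
  have s: "\<psi>_sum y > 0" by (rule \<psi>_sum_pos[OF y])
  have "blend c g y - z = (\<Sum>k\<in>active y. \<psi> k y * (c k + g k \<bullet> y - z)) / \<psi>_sum y"
    using s by (simp add: blend_def \<psi>_sum_def field_simps sum_subtractf right_diff_distrib
        sum_distrib_right sum_distrib_left)
  also have "\<bar>\<dots>\<bar> \<le> (\<Sum>k\<in>active y. \<psi> k y * B) / \<psi>_sum y"
  proof -
    have "\<bar>\<Sum>k\<in>active y. \<psi> k y * (c k + g k \<bullet> y - z)\<bar> \<le> (\<Sum>k\<in>active y. \<psi> k y * B)"
      by (rule order_trans[OF sum_abs sum_mono]) (simp add: abs_mult \<psi>_nonneg B mult_left_mono)
    then show ?thesis using s by (simp add: abs_divide divide_right_mono)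
  qed
  also have "\<dots> = B" using s by (simp add: \<psi>_sum_def sum_distrib_right[symmetric])
  finally show ?thesis .
qed

lemma blend_grad_diff:
  assumes "y \<notin> K"
  shows "blend_grad c g y - g0 = (1 / \<psi>_sum y) *\<^sub>R
     ((\<Sum>k\<in>active y. \<psi> k y *\<^sub>R (g k - g0)) + (\<Sum>k\<in>active y. (c k + g k \<bullet> y - blend c g y) *\<^sub>R \<psi>_grad k y))"
proof -
  have "g0 = (1 / \<psi>_sum y) *\<^sub>R (\<Sum>k\<in>active y. \<psi> k y *\<^sub>R g0)"
    using \<psi>_sum_pos[OF assms] by (simp add: \<psi>_sum_def scaleR_sum_left[symmetric])
  then show ?thesis
    by (simp add: blend_grad_def sum.distrib scaleR_diff_right sum_subtractf algebra_simps)
qed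

lemma norm_blend_grad_diff_le:
  assumes y: "y \<notin> K"
    and B1: "\<And>k. k \<in> active y \<Longrightarrow> norm (g k - g0) \<le> B1"
    and B2: "\<And>k. k \<in> active y \<Longrightarrow> \<bar>c k + g k \<bullet> y - z\<bar> \<le> B2"
  shows "norm (blend_grad c g y - g0) \<le> B1 + 2 * B2 * (16/9) * (26 * overlap_bound / \<delta> y)"
proof -
  let ?A = "active y" and ?s = "\<psi>_sum y"
  have s: "?s > 0" "1 / ?s \<le> 16/9" using \<psi>_sum_ge[OF y] by (auto simp: divide_simps)
  have B2_0: "B2 \<ge> 0" using B2 active_nonempty[OF y] by force
  have "\<bar>blend c g y - z\<bar> \<le> B2" by (rule blend_dist_le[OF y]) (rule B2)
  then have "\<bar>c k + g k \<bullet> y - blend c g y\<bar> \<le> 2 * B2" if "k \<in> ?A" for k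
    using B2[OF that] by linarith
  then have n2: "norm (\<Sum>k\<in>?A. (c k + g k \<bullet> y - blend c g y) *\<^sub>R \<psi>_grad k y)
      \<le> 2 * B2 * (\<Sum>k\<in>?A. norm (\<psi>_grad k y))"
    by (auto simp: sum_distrib_left intro!: order_trans[OF norm_sum sum_mono] mult_right_mono)
  have n1: "norm (\<Sum>k\<in>?A. \<psi> k y *\<^sub>R (g k - g0)) \<le> ?s * B1"
    unfolding \<psi>_sum_def sum_distrib_right
    by (rule order_trans[OF norm_sum sum_mono]) (simp add: \<psi>_nonneg B1 mult_left_mono)
  have "norm (blend_grad c g y - g0) \<le> (1 / ?s) * (?s * B1 + 2 * B2 * (\<Sum>k\<in>?A. norm (\<psi>_grad k y)))"
    unfolding blend_grad_diff[OF y] using s(1) n1 n2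
    by (simp add: divide_right_mono norm_triangle_le)
  also have "\<dots> = B1 + (1 / ?s) * (2 * B2 * (\<Sum>k\<in>?A. norm (\<psi>_grad k y)))"
    using s(1) by (simp add: field_simps)
  also have "\<dots> \<le> B1 + (16/9) * (2 * B2 * (26 * overlap_bound / \<delta> y))"
    using s B2_0 sum_norm_\<psi>_grad_le[OF y]
    by (intro add_left_mono mult_mono mult_left_mono) (auto intro!: sum_nonneg mult_nonneg_nonneg)
  finally show ?thesis by (simp add: mult_ac)
qed

lemma blend_cong:
  "(\<And>k. k \<in> active y \<Longrightarrow> c k = c' k) \<Longrightarrow> (\<And>k. k \<in> active y \<Longrightarrow> g k = g' k) \<Longrightarrow>
     blend c g y = blend c' g' y"
  unfolding blend_def by (intro arg_cong2[where f="(/)"] sum.cong) auto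

lemma blend_add: "blend (\<lambda>k. c k + c' k) (\<lambda>k. g k + g' k) y = blend c g y + blend c' g' y"
  by (simp add: blend_def inner_add_left algebra_simps sum.distrib add_divide_distrib)

lemma blend_cmult: "blend (\<lambda>k. a * c k) (\<lambda>k. a *\<^sub>R g k) y = a * blend c g y"
  by (simp add: blend_def algebra_simps sum_distrib_left)

end

section \<open>The extension operator\<close>

locale extension_domain = whitney_cover \<Omega> + quasiconvex_domain \<Omega> r L
  for \<Omega> :: "'a::euclidean_space set" and r L :: real
begin

text \<open>A cell of size at most \<open>1\<close> carries the first-order Taylor polynomial of \<open>f\<close> at its anchor;
  larger cells, which only occur where \<open>\<delta> > 2\<close>, carry the zero polynomial. This keeps the
  extension bounded far away from \<open>\<Omega>\<close>.\<close>

definition cell_const :: "('a \<Rightarrow> real) \<Rightarrow> int \<times> 'a \<Rightarrow> real" where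
  "cell_const f k = (if fst k \<le> 0 then f (anchor k) - grad f (anchor k) \<bullet> anchor k else 0)"

definition cell_slope :: "('a \<Rightarrow> real) \<Rightarrow> int \<times> 'a \<Rightarrow> 'a" where
  "cell_slope f k = (if fst k \<le> 0 then grad f (anchor k) else 0)"

definition ext :: "('a \<Rightarrow> real) \<Rightarrow> 'a \<Rightarrow> real" where
  "ext f x = (if x \<in> K then closure_extension \<Omega> f x else blend (cell_const f) (cell_slope f) x)"

lemma cell_affine_small:
  "fst k \<le> 0 \<Longrightarrow> cell_const f k + cell_slope f k \<bullet> y = f (anchor k) + grad f (anchor k) \<bullet> (y - anchor k)"
  by (simp add: cell_const_def cell_slope_def inner_diff_right)

lemma cell_affine_large: "\<not> fst k \<le> 0 \<Longrightarrow> cell_const f k + cell_slope f k \<bullet> y = 0"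
  by (simp add: cell_const_def cell_slope_def)

lemma active_cell_small:
  assumes "k \<in> active y" "\<delta> y \<le> 2"
  shows "fst k \<le> 0"
proof -
  have "dyadic (fst k) \<le> real DIM('a) * dyadic (fst k)"
    using real_DIM_ge_1[where 'a='a] by simp
  then have "dyadic (fst k) \<le> 1" using active_cell(3)[OF assms(1)] assms(2) by linarith
  then show ?thesis by (simp add: dyadic_le_one_iff)
qed

lemma ext_cong:
  assumes f: "\<And>x. x \<in> \<Omega> \<Longrightarrow> f differentiable (at x)" and eq: "\<And>x. x \<in> \<Omega> \<Longrightarrow> f x = g x"
  shows "ext f = ext g"
proof -
  have "grad g (anchor k) = grad f (anchor k)" "g (anchor k) = f (anchor k)" if "k \<in> cells" for k
    using anchor(1)[OF that] eq f by (auto intro: grad_cong_open[OF _ open_domain])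
  then have "blend (cell_const f) (cell_slope f) x = blend (cell_const g) (cell_slope g) x" for x
    by (intro blend_cong) (auto simp: cell_const_def cell_slope_def active_def)
  moreover have "closure_extension \<Omega> f = closure_extension \<Omega> g" by (rule closure_extension_cong) (rule eq)
  ultimately show ?thesis by (auto simp: ext_def)
qed

lemma ext_add:
  assumes "C1_closure \<Omega> f" "C1_closure \<Omega> g"
  shows "ext (\<lambda>x. f x + g x) = (\<lambda>x. ext f x + ext g x)"
proof -
  have d: "f differentiable (at x)" "g differentiable (at x)" if "x \<in> \<Omega>" for x
    using assms that by (auto simp: C1_closure_def)
  have "blend (cell_const (\<lambda>x. f x + g x)) (cell_slope (\<lambda>x. f x + g x)) x
      = blend (\<lambda>k. cell_const f k + cell_const g k) (\<lambda>k. cell_slope f k + cell_slope g k) x" for x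
    by (intro blend_cong)
      (auto simp: cell_const_def cell_slope_def grad_add d anchor(1) active_def inner_add_left)
  then show ?thesis
    using assms by (auto simp: ext_def blend_add closure_extension_add C1_closure_def)
qed

lemma ext_cmult:
  assumes "C1_closure \<Omega> f"
  shows "ext (\<lambda>x. c * f x) = (\<lambda>x. c * ext f x)"
proof -
  have d: "f differentiable (at x)" if "x \<in> \<Omega>" for x
    using assms that by (auto simp: C1_closure_def)
  have "blend (cell_const (\<lambda>x. c * f x)) (cell_slope (\<lambda>x. c * f x)) x
      = blend (\<lambda>k. c * cell_const f k) (\<lambda>k. c *\<^sub>R cell_slope f k) x" for x
    by (intro blend_cong) (auto simp: cell_const_def cell_slope_def grad_cmult d anchor(1) active_def algebra_simps)
  then show ?thesis
    using assms closure_extension_scaleR[of \<Omega> f _ c]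
    by (auto simp: ext_def blend_cmult C1_closure_def)
qed

definition C_affine :: real where
  "C_affine = 1 + 156 * (real DIM('a))\<^sup>2"

definition C_osc :: real where
  "C_osc = 24 * real DIM('a) * (2 * L + 2 / r + 2) + 2 * C_affine"

definition C_grad :: real where
  "C_grad = real DIM('a) + 2 * C_osc * (16/9) * (26 * overlap_bound)"

definition C_ext :: real where
  "C_ext = max C_affine C_grad"

end

locale C1_function = extension_domain +
  fixes f :: "'a \<Rightarrow> real"
  assumes C1: "C1_closure \<Omega> f"
begin

abbreviation "Nf \<equiv> C1_norm \<Omega> f"
abbreviation "fK \<equiv> closure_extension \<Omega> f"
abbreviation "gK \<equiv> closure_extension \<Omega> (grad f)"

lemma differentiable: "x \<in> \<Omega> \<Longrightarrow> f differentiable (at x)"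
  using C1 by (simp add: C1_closure_def)

lemma uniformly_continuous_f: "uniformly_continuous_on \<Omega> f"
  using C1 by (simp add: C1_closure_def)

lemma uniformly_continuous_grad: "uniformly_continuous_on \<Omega> (grad f)"
  using C1 by (simp add: C1_closure_def uniformly_continuous_on_grad)

lemma
  shows Nf_nonneg: "0 \<le> Nf"
    and abs_f_le: "x \<in> \<Omega> \<Longrightarrow> \<bar>f x\<bar> \<le> Nf"
    and norm_grad_f_le: "x \<in> \<Omega> \<Longrightarrow> norm (grad f x) \<le> real DIM('a) * Nf"
proof -
  have "bounded (f ` \<Omega>)" "\<And>i. i \<in> Basis \<Longrightarrow> bounded (partial_deriv f i ` \<Omega>)"
    using C1 bounded by (auto simp: C1_closure_def intro: bounded_uniformly_continuous_image)
  note C1_norm_ge[OF this]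
  then show "0 \<le> Nf" "x \<in> \<Omega> \<Longrightarrow> \<bar>f x\<bar> \<le> Nf" "x \<in> \<Omega> \<Longrightarrow> norm (grad f x) \<le> real DIM('a) * Nf"
    by (auto intro: norm_grad_le)
qed

lemma abs_fK_le: "x \<in> K \<Longrightarrow> \<bar>fK x\<bar> \<le> Nf"
  using norm_closure_extension_le[OF uniformly_continuous_f, of Nf] abs_f_le by simp

lemma norm_gK_le: "x \<in> K \<Longrightarrow> norm (gK x) \<le> real DIM('a) * Nf"
  using norm_closure_extension_le[OF uniformly_continuous_grad] norm_grad_f_le by blast

lemma uniformly_continuous_gK: "uniformly_continuous_on K gK"
  using compact_uniformly_continuous[OF continuous_on_closure_extension[OF uniformly_continuous_grad] compact_K] .

lemma first_order_approx_K:
  assumes "e > 0"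
  obtains \<eta> where "\<eta> > 0"
    "\<And>x y. x \<in> K \<Longrightarrow> y \<in> K \<Longrightarrow> dist x y < \<eta> \<Longrightarrow> \<bar>fK y - fK x - gK x \<bullet> (y - x)\<bar> \<le> e * dist x y"
    "\<And>x y. x \<in> K \<Longrightarrow> y \<in> K \<Longrightarrow> dist x y < \<eta> \<Longrightarrow> norm (gK y - gK x) \<le> e"
proof -
  obtain \<eta>1 where \<eta>1: "\<eta>1 > 0" "\<And>x y. x \<in> \<Omega> \<Longrightarrow> y \<in> \<Omega> \<Longrightarrow> dist x y < \<eta>1 \<Longrightarrow>
      \<bar>f y - f x - grad f x \<bullet> (y - x)\<bar> \<le> e * dist x y"
    using taylor_remainder_uniform[OF differentiable uniformly_continuous_grad assms] by blast
  obtain \<eta>2 where \<eta>2: "\<eta>2 > 0" "\<forall>x\<in>K. \<forall>y\<in>K. dist y x < \<eta>2 \<longrightarrow> dist (gK y) (gK x) < e"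
    using uniformly_continuous_gK assms unfolding uniformly_continuous_on_def by blast
  show ?thesis
  proof (rule that[of "min \<eta>1 \<eta>2"])
    fix x y assume xy: "x \<in> K" "y \<in> K" "dist x y < min \<eta>1 \<eta>2"
    then have "dist x y < \<eta>1" by simp
    with \<eta>1(2) xy(1,2) show "\<bar>fK y - fK x - gK x \<bullet> (y - x)\<bar> \<le> e * dist x y"
      by (rule taylor_estimate_closure_extension[OF uniformly_continuous_f uniformly_continuous_grad])
    have "dist y x < \<eta>2" using xy(3) by (simp add: dist_commute)
    then show "norm (gK y - gK x) \<le> e" using \<eta>2(2) xy(1,2) by (auto simp: dist_norm less_imp_le)
  qed (use \<eta>1(1) \<eta>2(1) in simp)
qed

lemma cell_affine_minus_affine:
  assumes "fst k \<le> 0"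
  shows "cell_const f k + cell_slope f k \<bullet> y - (a + b \<bullet> (y - x))
    = (f (anchor k) - a - b \<bullet> (anchor k - x)) + (grad f (anchor k) - b) \<bullet> (y - anchor k)"
  using assms by (simp add: cell_affine_small inner_diff_left inner_diff_right algebra_simps)

lemma abs_cell_affine_le:
  assumes y: "y \<notin> K" and k: "k \<in> active y"
  shows "\<bar>cell_const f k + cell_slope f k \<bullet> y\<bar> \<le> C_affine * Nf"
proof (cases "fst k \<le> 0")
  case True
  let ?p = "anchor k"
  have p: "?p \<in> \<Omega>" using anchor(1) active_cell(1)[OF k] .
  have "dyadic (fst k) \<le> 1" using True by (simp add: dyadic_le_one_iff)
  then have "real DIM('a) * dyadic (fst k) \<le> real DIM('a)"
    using mult_left_mono[of _ 1 "real DIM('a)"] by simp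
  then have "dist y ?p \<le> 12 * (13 * real DIM('a))" using active_cell(4,5)[OF k] by linarith
  then have "norm (y - ?p) \<le> 12 * (13 * real DIM('a))" by (simp add: dist_norm)
  then have "\<bar>grad f ?p \<bullet> (y - ?p)\<bar> \<le> (real DIM('a) * Nf) * (12 * (13 * real DIM('a)))"
    using norm_grad_f_le[OF p] Nf_nonneg
    by (intro order_trans[OF Cauchy_Schwarz_ineq2 mult_mono]) auto
  then have "\<bar>f ?p + grad f ?p \<bullet> (y - ?p)\<bar> \<le> Nf + (real DIM('a) * Nf) * (12 * (13 * real DIM('a)))"
    using abs_f_le[OF p] by linarith
  also have "\<dots> = C_affine * Nf" by (simp add: C_affine_def power2_eq_square algebra_simps)
  finally show ?thesis using cell_affine_small[OF True] by simp
next
  case False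
  then show ?thesis using cell_affine_large Nf_nonneg by (simp add: C_affine_def)
qed

lemma taylor_polys_diff_le:
  assumes p: "p \<in> \<Omega>" "dist y p \<le> \<rho>" and q: "q \<in> \<Omega>" "dist y q \<le> \<rho>"
  shows "\<bar>(f p + grad f p \<bullet> (y - p)) - (f q + grad f q \<bullet> (y - q))\<bar>
    \<le> 2 * real DIM('a) * (2 * L + 2 / r + 2) * Nf * \<rho>"
proof -
  let ?d = "real DIM('a)" and ?T = "2 * L + 2 / r + 1"
  have "Nf \<le> ?d * Nf" using mult_right_mono[OF real_DIM_ge_1 Nf_nonneg] by simp
  then have f: "\<bar>f z\<bar> \<le> ?d * Nf" if "z \<in> \<Omega>" for z using abs_f_le[OF that] by linarith
  have "\<bar>f p - f q - grad f q \<bullet> (p - q)\<bar> \<le> ?T * (?d * Nf) * dist q p"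
    by (rule taylor_remainder_bound[OF differentiable f norm_grad_f_le q(1) p(1)])
  also have "\<dots> \<le> ?T * (?d * Nf) * (2 * \<rho>)"
    using dist_triangle[of q p y] p q r_pos L_ge_1 Nf_nonneg
    by (intro mult_left_mono) (auto simp: dist_commute)
  finally have t1: "\<bar>f p - f q - grad f q \<bullet> (p - q)\<bar> \<le> ?T * (?d * Nf) * (2 * \<rho>)" .
  have "norm (grad f p - grad f q) \<le> 2 * ?d * Nf"
    using norm_triangle_ineq4[of "grad f p" "grad f q"] norm_grad_f_le[OF p(1)] norm_grad_f_le[OF q(1)]
    by linarith
  then have t2: "\<bar>(grad f p - grad f q) \<bullet> (y - p)\<bar> \<le> (2 * ?d * Nf) * \<rho>"
    using p(2) Nf_nonneg by (intro order_trans[OF Cauchy_Schwarz_ineq2 mult_mono]) (auto simp: dist_norm)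
  have "(f p + grad f p \<bullet> (y - p)) - (f q + grad f q \<bullet> (y - q))
      = (f p - f q - grad f q \<bullet> (p - q)) + (grad f p - grad f q) \<bullet> (y - p)"
    by (simp add: inner_diff_left inner_diff_right algebra_simps)
  moreover have "?T * (?d * Nf) * (2 * \<rho>) + (2 * ?d * Nf) * \<rho> = 2 * ?d * (2 * L + 2 / r + 2) * Nf * \<rho>"
    by (simp add: algebra_simps)
  ultimately show ?thesis using t1 t2 by linarith
qed

lemma cell_affine_oscillation:
  assumes y: "y \<notin> K" and k: "k \<in> active y" and l: "l \<in> active y"
  shows "\<bar>(cell_const f k + cell_slope f k \<bullet> y) - (cell_const f l + cell_slope f l \<bullet> y)\<bar>
    \<le> C_osc * Nf * \<delta> y"
proof -
  have "0 \<le> 24 * real DIM('a) * (2 * L + 2 / r + 2)" using r_pos L_ge_1 by simp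
  then have C: "2 * C_affine \<le> C_osc" "24 * real DIM('a) * (2 * L + 2 / r + 2) \<le> C_osc" "0 \<le> C_osc"
    by (auto simp: C_osc_def C_affine_def)
  show ?thesis
  proof (cases "fst k \<le> 0 \<and> fst l \<le> 0")
    case True
    have "\<bar>(cell_const f k + cell_slope f k \<bullet> y) - (cell_const f l + cell_slope f l \<bullet> y)\<bar>
        \<le> 2 * real DIM('a) * (2 * L + 2 / r + 2) * Nf * (12 * \<delta> y)"
      unfolding cell_affine_small[OF conjunct1[OF True]] cell_affine_small[OF conjunct2[OF True]]
      using anchor(1)[OF active_cell(1)] active_cell(5)[OF k] active_cell(5)[OF l] k l
      by (intro taylor_polys_diff_le) auto
    also have "\<dots> \<le> C_osc * Nf * \<delta> y"
      using C(2) Nf_nonneg \<delta>_nonneg[of y] by (simp add: mult_right_mono mult.assoc[symmetric])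
    finally show ?thesis .
  next
    case False
    then have \<delta>: "2 < \<delta> y" using active_cell_small[OF k] active_cell_small[OF l] by linarith
    have "\<bar>(cell_const f k + cell_slope f k \<bullet> y) - (cell_const f l + cell_slope f l \<bullet> y)\<bar>
        \<le> 2 * C_affine * Nf"
      using abs_cell_affine_le[OF y k] abs_cell_affine_le[OF y l] by linarith
    also have "\<dots> \<le> C_osc * Nf * 1" using C Nf_nonneg by (simp add: mult_right_mono)
    also have "\<dots> \<le> C_osc * Nf * \<delta> y" using C Nf_nonneg \<delta> by (intro mult_left_mono) auto
    finally show ?thesis .
  qed
qed

lemma abs_blend_le: "y \<notin> K \<Longrightarrow> \<bar>blend (cell_const f) (cell_slope f) y\<bar> \<le> C_affine * Nf"
  using blend_dist_le[of y "cell_const f" "cell_slope f" 0] abs_cell_affine_le by simp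

lemma norm_blend_grad_le:
  assumes y: "y \<notin> K"
  shows "norm (blend_grad (cell_const f) (cell_slope f) y) \<le> C_grad * Nf"
proof -
  obtain l where l: "l \<in> active y" using active_nonempty[OF y] by blast
  have "norm (blend_grad (cell_const f) (cell_slope f) y - 0)
      \<le> real DIM('a) * Nf + 2 * (C_osc * Nf * \<delta> y) * (16/9) * (26 * overlap_bound / \<delta> y)"
  proof (rule norm_blend_grad_diff_le[OF y])
    show "norm (cell_slope f k - 0) \<le> real DIM('a) * Nf" if "k \<in> active y" for k
      using norm_grad_f_le[OF anchor(1)[OF active_cell(1)[OF that]]] Nf_nonneg
      by (simp add: cell_slope_def)
    show "\<bar>cell_const f k + cell_slope f k \<bullet> y - (cell_const f l + cell_slope f l \<bullet> y)\<bar> \<le> C_osc * Nf * \<delta> y"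
      if "k \<in> active y" for k
      by (rule cell_affine_oscillation[OF y that l])
  qed
  also have "\<dots> = C_grad * Nf" using \<delta>_pos[OF y] by (simp add: C_grad_def field_simps)
  finally show ?thesis by simp
qed

lemma cell_affine_near_point:
  assumes k: "k \<in> active y" "fst k \<le> 0" and x: "x \<in> K" "\<delta> y \<le> dist y x" and \<epsilon>: "\<epsilon> \<ge> 0"
    and taylor: "\<bar>fK (anchor k) - fK x - gK x \<bullet> (anchor k - x)\<bar> \<le> \<epsilon> * dist x (anchor k)"
    and slope: "norm (gK (anchor k) - gK x) \<le> \<epsilon>"
  shows "\<bar>cell_const f k + cell_slope f k \<bullet> y - (fK x + gK x \<bullet> (y - x))\<bar> \<le> 25 * \<epsilon> * dist y x"
proof -
  let ?p = "anchor k"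
  have p: "?p \<in> \<Omega>" using anchor(1) active_cell(1)[OF k(1)] .
  have yp: "dist y ?p \<le> 12 * dist y x" using active_cell(5)[OF k(1)] x(2) by linarith
  then have "dist x ?p \<le> 13 * dist y x" using dist_triangle[of x ?p y] by (simp add: dist_commute)
  then have "\<epsilon> * dist x ?p \<le> \<epsilon> * (13 * dist y x)" using \<epsilon> by (rule mult_left_mono)
  then have t1: "\<bar>f ?p - fK x - gK x \<bullet> (?p - x)\<bar> \<le> \<epsilon> * (13 * dist y x)"
    using taylor p by simp
  have t2: "\<bar>(grad f ?p - gK x) \<bullet> (y - ?p)\<bar> \<le> \<epsilon> * (12 * dist y x)"
    using slope yp p \<epsilon> by (intro order_trans[OF Cauchy_Schwarz_ineq2 mult_mono]) (auto simp: dist_norm)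
  show ?thesis unfolding cell_affine_minus_affine[OF k(2)] using t1 t2 by linarith
qed

lemma cell_affine_near_boundary:
  assumes e: "e > 0"
  obtains \<eta> where "\<eta> > 0"
    "\<And>y x k. y \<notin> K \<Longrightarrow> x \<in> K \<Longrightarrow> dist y x < \<eta> \<Longrightarrow> k \<in> active y \<Longrightarrow>
       \<bar>cell_const f k + cell_slope f k \<bullet> y - (fK x + gK x \<bullet> (y - x))\<bar> \<le> e * dist y x \<and>
       norm (cell_slope f k - gK x) \<le> e"
proof -
  have e25: "e / 25 > 0" using e by simp
  obtain \<eta> where \<eta>: "\<eta> > 0" "\<And>x y. x \<in> K \<Longrightarrow> y \<in> K \<Longrightarrow> dist x y < \<eta> \<Longrightarrow>
      \<bar>fK y - fK x - gK x \<bullet> (y - x)\<bar> \<le> e / 25 * dist x y"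
    "\<And>x y. x \<in> K \<Longrightarrow> y \<in> K \<Longrightarrow> dist x y < \<eta> \<Longrightarrow> norm (gK y - gK x) \<le> e / 25"
    using first_order_approx_K[OF e25] by blast
  show ?thesis
  proof (rule that[of "min 1 (\<eta> / 13)"])
    fix y x k assume y: "y \<notin> K" and x: "x \<in> K" and d: "dist y x < min 1 (\<eta> / 13)" and k: "k \<in> active y"
    have \<delta>: "\<delta> y \<le> dist y x" by (rule \<delta>_le_dist[OF x])
    then have small: "fst k \<le> 0" using active_cell_small[OF k] d by simp
    have pK: "anchor k \<in> K" using anchor(1) active_cell(1)[OF k] closure_subset by blast
    have "dist x (anchor k) \<le> 13 * dist y x"
      using active_cell(5)[OF k] \<delta> dist_triangle[of x "anchor k" y] by (simp add: dist_commute)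
    then have "dist x (anchor k) < \<eta>" using d by simp
    then have t: "\<bar>fK (anchor k) - fK x - gK x \<bullet> (anchor k - x)\<bar> \<le> e / 25 * dist x (anchor k)"
      and s: "norm (gK (anchor k) - gK x) \<le> e / 25"
      using \<eta>(2,3)[OF x pK] by auto
    show "\<bar>cell_const f k + cell_slope f k \<bullet> y - (fK x + gK x \<bullet> (y - x))\<bar> \<le> e * dist y x \<and>
       norm (cell_slope f k - gK x) \<le> e"
      using cell_affine_near_point[OF k small x \<delta> _ t s] s e small anchor(1)[OF active_cell(1)[OF k]]
      by (simp add: cell_slope_def)
  qed (use \<eta>(1) in simp)
qed

lemma blend_grad_near_boundary:
  assumes e: "e > 0"
  obtains \<eta> where "\<eta> > 0"
    "\<And>y x. y \<notin> K \<Longrightarrow> x \<in> K \<Longrightarrow> \<delta> y = dist y x \<Longrightarrow> dist y x < \<eta> \<Longrightarrow>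
       norm (blend_grad (cell_const f) (cell_slope f) y - gK x) \<le> e"
proof -
  define c where "c = 1 + 2 * (16/9) * (26 * real overlap_bound)"
  have c: "c > 0" by (simp add: c_def)
  obtain \<eta> where \<eta>: "\<eta> > 0" "\<And>y x k. y \<notin> K \<Longrightarrow> x \<in> K \<Longrightarrow> dist y x < \<eta> \<Longrightarrow> k \<in> active y \<Longrightarrow>
       \<bar>cell_const f k + cell_slope f k \<bullet> y - (fK x + gK x \<bullet> (y - x))\<bar> \<le> e / c * dist y x \<and>
       norm (cell_slope f k - gK x) \<le> e / c"
    using cell_affine_near_boundary[of "e / c"] e c by auto
  show ?thesis
  proof (rule that[OF \<eta>(1)])
    fix y x assume y: "y \<notin> K" and x: "x \<in> K" and "\<delta> y = dist y x" "dist y x < \<eta>"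
    then have "norm (blend_grad (cell_const f) (cell_slope f) y - gK x)
        \<le> e / c + 2 * (e / c * \<delta> y) * (16/9) * (26 * overlap_bound / \<delta> y)"
      using \<eta>(2)[OF y x] by (intro norm_blend_grad_diff_le[OF y]) auto
    also have "\<dots> = e / c * (1 + 2 * (16/9) * (26 * real overlap_bound))"
      using \<delta>_pos[OF y] c by (simp add: field_simps)
    also have "\<dots> = e" using c by (simp add: c_def)
    finally show "norm (blend_grad (cell_const f) (cell_slope f) y - gK x) \<le> e" .
  qed
qed

lemma ext_on_K: "x \<in> K \<Longrightarrow> ext f x = fK x"
  by (simp add: ext_def)

lemma ext_off_K: "x \<notin> K \<Longrightarrow> ext f x = blend (cell_const f) (cell_slope f) x"
  by (simp add: ext_def)

definition ext_grad :: "'a \<Rightarrow> 'a" where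
  "ext_grad x = (if x \<in> K then gK x else blend_grad (cell_const f) (cell_slope f) x)"

lemma ext_has_derivative_on_K:
  assumes x: "x \<in> K"
  shows "(ext f has_derivative (\<lambda>w. gK x \<bullet> w)) (at x)"
  unfolding has_derivative_at_alt
proof (intro conjI allI impI)
  show "bounded_linear (\<lambda>w. gK x \<bullet> w)" by (rule bounded_linear_inner_right)
  fix e :: real assume e: "e > 0"
  obtain \<eta>1 where \<eta>1: "\<eta>1 > 0" "\<And>x y. x \<in> K \<Longrightarrow> y \<in> K \<Longrightarrow> dist x y < \<eta>1 \<Longrightarrow>
      \<bar>fK y - fK x - gK x \<bullet> (y - x)\<bar> \<le> e * dist x y"
    "\<And>x y. x \<in> K \<Longrightarrow> y \<in> K \<Longrightarrow> dist x y < \<eta>1 \<Longrightarrow> norm (gK y - gK x) \<le> e"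
    using first_order_approx_K[OF e] by blast
  obtain \<eta>2 where \<eta>2: "\<eta>2 > 0" "\<And>y x k. y \<notin> K \<Longrightarrow> x \<in> K \<Longrightarrow> dist y x < \<eta>2 \<Longrightarrow> k \<in> active y \<Longrightarrow>
      \<bar>cell_const f k + cell_slope f k \<bullet> y - (fK x + gK x \<bullet> (y - x))\<bar> \<le> e * dist y x"
    using cell_affine_near_boundary[OF e] by metis
  have "\<bar>ext f y - ext f x - gK x \<bullet> (y - x)\<bar> \<le> e * dist x y" if y: "dist x y < min \<eta>1 \<eta>2" for y
  proof (cases "y \<in> K")
    case True
    then show ?thesis using \<eta>1(2)[OF x True] y by (simp add: ext_on_K x)
  next
    case False
    have "\<bar>blend (cell_const f) (cell_slope f) y - (fK x + gK x \<bullet> (y - x))\<bar> \<le> e * dist y x"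
      using \<eta>2(2)[OF False x] y by (intro blend_dist_le[OF False]) (simp add: dist_commute)
    then show ?thesis by (simp add: ext_on_K x ext_off_K False dist_commute algebra_simps)
  qed
  then show "\<exists>d>0. \<forall>y. norm (y - x) < d \<longrightarrow> norm (ext f y - ext f x - gK x \<bullet> (y - x)) \<le> e * norm (y - x)"
    using \<eta>1(1) \<eta>2(1) by (intro exI[of _ "min \<eta>1 \<eta>2"]) (auto simp: dist_norm norm_minus_commute)
qed

lemma ext_has_derivative: "(ext f has_derivative (\<lambda>w. ext_grad x \<bullet> w)) (at x)"
proof (cases "x \<in> K")
  case False
  then have "ext_grad x = blend_grad (cell_const f) (cell_slope f) x" by (simp add: ext_grad_def)
  moreover have "(ext f has_derivative (\<lambda>w. blend_grad (cell_const f) (cell_slope f) x \<bullet> w)) (at x)"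
    by (rule has_derivative_transform_within_open[OF blend_has_derivative[OF False], where s="- K"])
      (use False ext_off_K in auto)
  ultimately show ?thesis by simp
qed (simp add: ext_grad_def ext_has_derivative_on_K)

lemma isCont_ext_grad: "isCont ext_grad x"
proof (cases "x \<in> K")
  case False
  have "\<forall>\<^sub>F y in nhds x. y \<in> - K" using False by (intro eventually_nhds_in_open) auto
  then have "\<forall>\<^sub>F y in nhds x. blend_grad (cell_const f) (cell_slope f) y = ext_grad y"
    by eventually_elim (simp add: ext_grad_def)
  then show ?thesis using isCont_cong isCont_blend_grad[OF False] by blast
next
  case x: True
  show ?thesis unfolding continuous_at_eps_delta
  proof (intro allI impI)
    fix e :: real assume "e > 0"
    then have e: "e / 2 > 0" by simp
    obtain \<eta> where \<eta>: "\<eta> > 0" "\<And>y x. y \<notin> K \<Longrightarrow> x \<in> K \<Longrightarrow> \<delta> y = dist y x \<Longrightarrow> dist y x < \<eta> \<Longrightarrow>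
        norm (blend_grad (cell_const f) (cell_slope f) y - gK x) \<le> e / 2"
      using blend_grad_near_boundary[OF e] by metis
    obtain d where d: "d > 0" "\<And>x x'. x \<in> K \<Longrightarrow> x' \<in> K \<Longrightarrow> dist x' x < d \<Longrightarrow> dist (gK x') (gK x) < e / 2"
      using uniformly_continuous_gK e unfolding uniformly_continuous_on_def by metis
    have "dist (ext_grad y) (ext_grad x) < e" if y: "dist y x < min \<eta> (d / 2)" for y
    proof (cases "y \<in> K")
      case True
      have "dist y x < d" using y zero_le_dist[of y x] by linarith
      then show ?thesis using d(2)[OF x True] e True by (simp add: ext_grad_def x)
    next
      case False
      obtain z where z: "z \<in> K" "\<delta> y = dist y z" by (rule obtain_nearest_point)
      have yz: "dist y z \<le> dist y x" using \<delta>_le_dist[OF x, of y] z(2) by simp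
      have "dist (blend_grad (cell_const f) (cell_slope f) y) (gK z) \<le> e / 2"
        using \<eta>(2)[OF False z] yz y by (simp add: dist_norm)
      moreover have "dist (gK z) (gK x) < e / 2"
        using d(2)[OF x z(1)] dist_triangle[of z x y] yz y by (simp add: dist_commute)
      ultimately show ?thesis
        using dist_triangle[of _ "gK x" "gK z"] False x by (simp add: ext_grad_def) (smt (verit))
    qed
    then show "\<exists>d>0. \<forall>y. dist y x < d \<longrightarrow> dist (ext_grad y) (ext_grad x) < e"
      using \<eta>(1) d(1) by (intro exI[of _ "min \<eta> (d / 2)"]) auto
  qed
qed

lemma C_ext_ge: "1 \<le> C_ext" "C_affine \<le> C_ext" "real DIM('a) \<le> C_ext" "C_grad \<le> C_ext"
proof -
  have "real DIM('a) \<le> (real DIM('a))\<^sup>2"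
    using mult_left_mono[OF real_DIM_ge_1, of "real DIM('a)"] by (simp add: power2_eq_square)
  then have "1 \<le> C_affine" by (simp add: C_affine_def)
  moreover have "0 \<le> C_osc" using r_pos L_ge_1 by (simp add: C_osc_def C_affine_def)
  then have "real DIM('a) \<le> C_grad" by (simp add: C_grad_def)
  ultimately show "1 \<le> C_ext" "C_affine \<le> C_ext" "real DIM('a) \<le> C_ext" "C_grad \<le> C_ext"
    by (auto simp: C_ext_def)
qed

lemma abs_ext_le: "\<bar>ext f x\<bar> \<le> C_ext * Nf"
proof (cases "x \<in> K")
  case True
  then show ?thesis
    using abs_fK_le[OF True] mult_right_mono[OF C_ext_ge(1) Nf_nonneg] by (simp add: ext_on_K)
next
  case False
  then show ?thesis
    using abs_blend_le[OF False] mult_right_mono[OF C_ext_ge(2) Nf_nonneg] by (simp add: ext_off_K)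
qed

lemma norm_ext_grad_le: "norm (ext_grad x) \<le> C_ext * Nf"
proof (cases "x \<in> K")
  case True
  then show ?thesis
    using norm_gK_le[OF True] mult_right_mono[OF C_ext_ge(3) Nf_nonneg] by (simp add: ext_grad_def)
next
  case False
  then show ?thesis
    using norm_blend_grad_le[OF False] mult_right_mono[OF C_ext_ge(4) Nf_nonneg] by (simp add: ext_grad_def)
qed

lemma partial_deriv_ext: "partial_deriv (ext f) i x = ext_grad x \<bullet> i"
  by (rule partial_deriv_eq_inner[OF ext_has_derivative])

lemma abs_partial_deriv_ext_le: "i \<in> Basis \<Longrightarrow> \<bar>partial_deriv (ext f) i x\<bar> \<le> C_ext * Nf"
  using Basis_le_norm[of i "ext_grad x"] norm_ext_grad_le[of x] by (simp add: partial_deriv_ext)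

lemma C1_bounded_ext: "C1_bounded (ext f)"
  unfolding C1_bounded_def
proof (intro conjI ballI allI)
  show "ext f differentiable (at x)" for x using ext_has_derivative by (auto simp: differentiable_def)
  show "continuous_on UNIV (partial_deriv (ext f) i)" for i
    unfolding partial_deriv_ext[abs_def]
    by (intro continuous_at_imp_continuous_on ballI continuous_intros isCont_ext_grad)
  show "bounded (range (ext f))" using abs_ext_le by (auto simp: bounded_iff)
  show "bounded (range (partial_deriv (ext f) i))" if "i \<in> Basis" for i
    using abs_partial_deriv_ext_le[OF that] by (auto simp: bounded_iff)
qed

lemma C1_norm_ext_le: "C1_norm UNIV (ext f) \<le> C_ext * Nf"
  using abs_ext_le abs_partial_deriv_ext_le C_ext_ge(1) Nf_nonneg by (intro C1_norm_le) auto

lemma tendsto_ext: "x \<in> K \<Longrightarrow> (f \<longlongrightarrow> ext f x) (at x within \<Omega>)"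
  using tendsto_closure_extension[OF uniformly_continuous_f] by (simp add: ext_on_K)

lemma ext_eq: "x \<in> \<Omega> \<Longrightarrow> ext f x = f x"
  using closure_subset by (force simp: ext_on_K)

end

context extension_domain
begin

lemma C1_extension:
  assumes "C1_closure \<Omega> f"
  shows "C1_bounded (ext f)" and "C1_norm UNIV (ext f) \<le> C_ext * C1_norm \<Omega> f"
    and "\<forall>x\<in>closure \<Omega>. (f \<longlongrightarrow> ext f x) (at x within \<Omega>)" and "\<forall>x\<in>\<Omega>. ext f x = f x"
proof -
  interpret C1_function \<Omega> r L f by unfold_locales (rule assms)
  show "C1_bounded (ext f)" "C1_norm UNIV (ext f) \<le> C_ext * C1_norm \<Omega> f"
    "\<forall>x\<in>closure \<Omega>. (f \<longlongrightarrow> ext f x) (at x within \<Omega>)" "\<forall>x\<in>\<Omega>. ext f x = f x"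
    using C1_bounded_ext C1_norm_ext_le tendsto_ext ext_eq by auto
qed

end

theorem theorem2p7:
  fixes \<Omega> :: "'a::euclidean_space set"
  assumes "open \<Omega>" and "bounded \<Omega>" and "unif_loc_quasiconvex \<Omega>"
  shows "\<exists>E :: ('a \<Rightarrow> real) \<Rightarrow> ('a \<Rightarrow> real).
           (\<forall>f. C1_closure \<Omega> f \<longrightarrow> C1_bounded (E f)) \<and>
           (\<forall>f g. C1_closure \<Omega> f \<longrightarrow> C1_closure \<Omega> g \<longrightarrow>
                  (\<forall>x\<in>\<Omega>. f x = g x) \<longrightarrow> E f = E g) \<and>
           (\<forall>f g. C1_closure \<Omega> f \<longrightarrow> C1_closure \<Omega> g \<longrightarrow>
                  E (\<lambda>x. f x + g x) = (\<lambda>x. E f x + E g x)) \<and>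
           (\<forall>f c. C1_closure \<Omega> f \<longrightarrow> E (\<lambda>x. c * f x) = (\<lambda>x. c * E f x)) \<and>
           (\<exists>C. \<forall>f. C1_closure \<Omega> f \<longrightarrow> C1_norm UNIV (E f) \<le> C * C1_norm \<Omega> f) \<and>
           (\<forall>f. C1_closure \<Omega> f \<longrightarrow>
                  (\<forall>x\<in>closure \<Omega>. ((f \<longlongrightarrow> E f x) (at x within \<Omega>))) \<and>
                  (\<forall>x\<in>\<Omega>. E f x = f x))"
proof (cases "\<Omega> = {}")
  case True
  then show ?thesis
    using C1_bounded_const C1_norm_const_le[of UNIV 0] by (intro exI[of _ "\<lambda>f x. 0"] conjI exI[of _ 0]) auto
next
  case False
  obtain r L where "quasiconvex_domain \<Omega> r L"
    using unif_loc_quasiconvex_imp_quasiconvex_domain assms(1,3) by blast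
  then interpret extension_domain \<Omega> r L
    using assms(2) False by (simp add: extension_domain_def whitney_cover_def)
  show ?thesis
  proof (intro exI[of _ ext] conjI allI impI exI[of _ C_ext])
    fix f g assume "C1_closure \<Omega> f" "C1_closure \<Omega> g"
    then show "ext (\<lambda>x. f x + g x) = (\<lambda>x. ext f x + ext g x)" by (rule ext_add)
  next
    fix f g assume "C1_closure \<Omega> f" "C1_closure \<Omega> g" "\<forall>x\<in>\<Omega>. f x = g x"
    then show "ext f = ext g" by (intro ext_cong) (auto simp: C1_closure_def)
  next
    fix f c assume "C1_closure \<Omega> f"
    then show "ext (\<lambda>x. c * f x) = (\<lambda>x. c * ext f x)" by (rule ext_cmult)
  qed (use C1_extension in auto)
qed

end
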